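(* Let $d\ge 1$, let $T>0$ be a finite random variable with $D\in\{1,\dots,d\}$, and let $\tilde T$ be a finite random variable with $0<\tilde T\le T$ and $\tilde D=D\,\mathbf 1\{\tilde T=T\}\in\{0,\dots,d\}$. Let $(\tilde T_1,\tilde D_1),\dots,(\tilde T_n,\tilde D_n)$ be independent copies of $(\tilde T,\tilde D)$, and let $\hat{\mathbf P}_n(t)$ be the Aalen--Johansen estimator defined below. Then $\hat{\mathbf P}_n(t)$ is a consistent estimator of $\mathbf P(t)$ as $n\to\infty$ for every $t\in\mathcal J$ if and only if $\tilde{\mathbf H}(t)=\mathbf H(t)$ for all $t\in\mathcal J$. Equivalently, the Aalen--Johansen estimators of $F_j(t)$, namely the entries $(1,j+1)$ of $\hat{\mathbf P}_n(t)$, are consistent for all $t\in\mathcal J$ and all $j=1,\dots,d$ if and only if $\tilde H_j(t)=H_j(t)$ for all $t\in\mathcal J$ and all $j=1,\dots,d$.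
   Context: Quantities of interest: - $S(t)=P(T>t)$. - $F_j(t)=P(T\le t,D=j)$. - $H_j(t)=\int_{(0,t]}S(s-)^{-1}F_j(ds)$ for $j=1,\dots,d$, and $H=\sum_{j=1}^d H_j$. Observed quantities: - $\tilde S(t)=P(\tilde T>t)$. - $\tilde F_j(t)=P(\tilde T\le t,\tilde D=j)$ for $j=0,\dots,d$. - $\tilde H_j(t)=\int_{(0,t]}\tilde S(s-)^{-1}\tilde F_j(ds)$, and $\tilde H=\sum_{j=1}^d\tilde H_j$. - Division by $0$ occurs only on null sets of the integrator and may be interpreted arbitrarily. - $\mathcal J=\{t\ge0:\tilde S(t)>0\}$. Matrices. $\mathbf P(t)$ is the $(d+1)\times(d+1)$ matrix with - first row $(S(t),F_1(t),\dots,F_d(t))$; - rows $2,\dots,d+1$ equal to the corresponding rows of the identity matrix. $\mathbf H(t)$ is the $(d+1)\times(d+1)$ matrix with first row $(-H(t),H_1(t),\dots,H_d(t))$ and all other rows zero. $\tilde{\mathbf H}(t)$ is defined in the same way with $\tilde H,\tilde H_j$ in place of $H,H_j$. Estimators. The Nelson--Aalen estimator is $$\hat H_{j,n}(t)=\sum_{i:\tilde T_i\le t,\tilde D_i=j}\frac{1}{\#\{k:\tilde T_k\ge \tilde T_i\}}.$$ Let $\hat H_n=\sum_{j=1}^d\hat H_{j,n}$, and let $\hat{\mathbf H}_n(t)$ be the matrix with first row $(-\hat H_n(t),\hat H_{1,n}(t),\dots,\hat H_{d,n}(t))$ and other rows zero. The Aalen--Johansen estimator is the product integral $\hat{\mathbf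 P}_n(t)=\prod_{(0,t]}(\mathbf I+\hat{\mathbf H}_n(ds))$, that is, the ordered finite product over jump times $s\le t$ of $\mathbf I+\Delta\hat{\mathbf H}_n(s)$. *)

theory Defs
  imports "HOL-Probability.Probability" "Jordan_Normal_Form.Matrix"
begin

definition surv :: "'a measure \<Rightarrow> ('a \<Rightarrow> real) \<Rightarrow> real \<Rightarrow> real" where
  "surv M X t = measure M {\<omega> \<in> space M. X \<omega> > t}"

definition subdist :: "'a measure \<Rightarrow> ('a \<Rightarrow> real) \<Rightarrow> ('a \<Rightarrow> nat) \<Rightarrow> nat \<Rightarrow> real \<Rightarrow> real" where
  "subdist M X Y j t = measure M {\<omega> \<in> space M. X \<omega> \<le> t \<and> Y \<omega> = j}"

definition left_lim :: "(real \<Rightarrow> real) \<Rightarrow> real \<Rightarrow> real" where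
  "left_lim f s = Lim (at_left s) f"

text \<open>Cause-specific cumulative hazard
  H_j(t) = integral over (0,t] of S(s-)^{-1} F_j(ds), with F_j(ds) the
  Lebesgue--Stieltjes measure of F_j (division by 0 yields 0).\<close>
definition cumhaz :: "'a measure \<Rightarrow> ('a \<Rightarrow> real) \<Rightarrow> ('a \<Rightarrow> nat) \<Rightarrow> nat \<Rightarrow> real \<Rightarrow> real" where
  "cumhaz M X Y j t =
     (LINT s:{0<..t}|interval_measure (subdist M X Y j). 1 / left_lim (surv M X) s)"

definition cumhaz_tot :: "'a measure \<Rightarrow> ('a \<Rightarrow> real) \<Rightarrow> ('a \<Rightarrow> nat) \<Rightarrow> nat \<Rightarrow> real \<Rightarrow> real" where
  "cumhaz_tot M X Y d t = (\<Sum>j\<in>{1..d}. cumhaz M X Y j t)"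

text \<open>The matrix P(t) (indices are 0-based: paper row 1 = row 0, column j+1 = column j).\<close>
definition Pmat :: "'a measure \<Rightarrow> ('a \<Rightarrow> real) \<Rightarrow> ('a \<Rightarrow> nat) \<Rightarrow> nat \<Rightarrow> real \<Rightarrow> real mat" where
  "Pmat M X Y d t = mat (d+1) (d+1) (\<lambda>(i,k).
      if i = 0 then (if k = 0 then surv M X t else subdist M X Y k t)
      else (if i = k then 1 else 0))"

text \<open>The matrix H(t) (resp. tilde H(t) when applied to the observed variables).\<close>
definition Hmat :: "'a measure \<Rightarrow> ('a \<Rightarrow> real) \<Rightarrow> ('a \<Rightarrow> nat) \<Rightarrow> nat \<Rightarrow> real \<Rightarrow> real mat" where
  "Hmat M X Y d t = mat (d+1) (d+1) (\<lambda>(i,k).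
      if i = 0 then (if k = 0 then - cumhaz_tot M X Y d t else cumhaz M X Y k t)
      else 0)"

definition NA :: "(nat \<Rightarrow> real \<times> nat) \<Rightarrow> nat \<Rightarrow> nat \<Rightarrow> real \<Rightarrow> real" where
  "NA xs n j t = (\<Sum>i\<in>{i. i < n \<and> fst (xs i) \<le> t \<and> snd (xs i) = j}.
      1 / real (card {k. k < n \<and> fst (xs k) \<ge> fst (xs i)}))"

definition NA_tot :: "(nat \<Rightarrow> real \<times> nat) \<Rightarrow> nat \<Rightarrow> nat \<Rightarrow> real \<Rightarrow> real" where
  "NA_tot xs n d t = (\<Sum>j\<in>{1..d}. NA xs n j t)"

definition NAmat :: "(nat \<Rightarrow> real \<times> nat) \<Rightarrow> nat \<Rightarrow> nat \<Rightarrow> real \<Rightarrow> real mat" where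
  "NAmat xs n d t = mat (d+1) (d+1) (\<lambda>(i,k).
      if i = 0 then (if k = 0 then - NA_tot xs n d t else NA xs n k t)
      else 0)"

definition NAjump :: "(nat \<Rightarrow> real \<times> nat) \<Rightarrow> nat \<Rightarrow> nat \<Rightarrow> real \<Rightarrow> real mat" where
  "NAjump xs n d s = mat (d+1) (d+1) (\<lambda>(i,k).
      NAmat xs n d s $$ (i,k) - left_lim (\<lambda>u. NAmat xs n d u $$ (i,k)) s)"

definition NA_jumps :: "(nat \<Rightarrow> real \<times> nat) \<Rightarrow> nat \<Rightarrow> nat \<Rightarrow> real \<Rightarrow> real set" where
  "NA_jumps xs n d t = {s. 0 < s \<and> s \<le> t \<and> NAjump xs n d s \<noteq> 0\<^sub>m (d+1) (d+1)}"

definition AJ :: "(nat \<Rightarrow> real \<times> nat) \<Rightarrow> nat \<Rightarrow> nat \<Rightarrow> real \<Rightarrow> real mat" where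
  "AJ xs n d t = foldl (\<lambda>A s. A * (1\<^sub>m (d+1) + NAjump xs n d s)) (1\<^sub>m (d+1))
      (sorted_list_of_set (NA_jumps xs n d t))"

definition consistent :: "'a measure \<Rightarrow> (nat \<Rightarrow> 'a \<Rightarrow> real) \<Rightarrow> real \<Rightarrow> bool" where
  "consistent M est \<theta> \<longleftrightarrow>
     (\<forall>e>0. (\<lambda>n. measure M {\<omega> \<in> space M. e < \<bar>est n \<omega> - \<theta>\<bar>}) \<longlonglongrightarrow> 0)"

end

(* On a cell (a,b] the estimator satisfies F^_k(b) - F^_k(a) = S^(a) W_k, where the
   conditional increment W_k is squeezed between ratios of sample counts.  By the weak law of
   large numbers these ratios converge in probability to bounds that also bracket the increment
   of the observed cause-specific hazard H~_k over the cell, while the increment of H_k differs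
   from (F_k(b) - F_k(a)) / S(a) only through the probability mass strictly inside the cell.
   Partition [0,t] into cells of small mass for both T and the observed time.  If F^_k is
   consistent, the increments of H_k and H~_k then agree up to a small error on each cell, and
   summing gives H~_k(t) = H_k(t).  Conversely, if the hazards agree, the error of
   (F^_1, ..., F^_d) grows across each cell by a random amount whose limit in probability is
   small, which yields consistency. *)

theory Submission
  imports Defs
begin

section \<open>The Aalen--Johansen estimator of a sample\<close>

definition at_risk :: "(nat \<Rightarrow> real \<times> nat) \<Rightarrow> nat \<Rightarrow> real \<Rightarrow> nat" where
  "at_risk xs n s = card {k. k < n \<and> fst (xs k) \<ge> s}"

definition at_risk_after :: "(nat \<Rightarrow> real \<times> nat) \<Rightarrow> nat \<Rightarrow> real \<Rightarrow> nat" where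
  "at_risk_after xs n a = card {k. k < n \<and> a < fst (xs k)}"

definition events_at :: "(nat \<Rightarrow> real \<times> nat) \<Rightarrow> nat \<Rightarrow> nat \<Rightarrow> real \<Rightarrow> nat" where
  "events_at xs n j s = card {i. i < n \<and> fst (xs i) = s \<and> snd (xs i) = j}"

definition events_between :: "(nat \<Rightarrow> real \<times> nat) \<Rightarrow> nat \<Rightarrow> nat \<Rightarrow> real \<Rightarrow> real \<Rightarrow> nat" where
  "events_between xs n j a b = card {i. i < n \<and> a < fst (xs i) \<and> fst (xs i) < b \<and> snd (xs i) = j}"

definition NA_incr :: "(nat \<Rightarrow> real \<times> nat) \<Rightarrow> nat \<Rightarrow> nat \<Rightarrow> real \<Rightarrow> real" where
  "NA_incr xs n j s = real (events_at xs n j s) / real (at_risk xs n s)"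

definition NA_tot_incr :: "(nat \<Rightarrow> real \<times> nat) \<Rightarrow> nat \<Rightarrow> nat \<Rightarrow> real \<Rightarrow> real" where
  "NA_tot_incr xs n d s = (\<Sum>j\<in>{1..d}. NA_incr xs n j s)"

lemma real_card_eq_sum:
  fixes n :: nat
  shows "real (card {i. i < n \<and> P i}) = (\<Sum>i<n. if P i then 1 else 0)"
  by (simp add: sum.If_cases Int_def conj_commute)

lemma NA_incr_eq_sums:
  "NA_incr xs n k s = (\<Sum>m<n. if fst (xs m) = s \<and> snd (xs m) = k then 1 else 0) / (\<Sum>m<n. if s \<le> fst (xs m) then 1 else 0)"
  unfolding NA_incr_def events_at_def at_risk_def real_card_eq_sum by simp

lemma at_risk_pos: "i < n \<Longrightarrow> fst (xs i) \<ge> s \<Longrightarrow> at_risk xs n s > 0"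
  unfolding at_risk_def by (subst card_gt_0_iff) auto

lemma NA_eq_before_plus_incr:
  "NA xs n j s = (\<Sum>i\<in>{i. i < n \<and> fst (xs i) < s \<and> snd (xs i) = j}. 1 / real (at_risk xs n (fst (xs i))))
     + NA_incr xs n j s"
proof -
  let ?w = "\<lambda>i. 1 / real (at_risk xs n (fst (xs i)))"
  have split: "{i. i < n \<and> fst (xs i) \<le> s \<and> snd (xs i) = j} =
      {i. i < n \<and> fst (xs i) < s \<and> snd (xs i) = j} \<union> {i. i < n \<and> fst (xs i) = s \<and> snd (xs i) = j}"
    by auto
  have "NA xs n j s = (\<Sum>i\<in>{i. i < n \<and> fst (xs i) < s \<and> snd (xs i) = j}. ?w i)
      + (\<Sum>i\<in>{i. i < n \<and> fst (xs i) = s \<and> snd (xs i) = j}. ?w i)"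
    unfolding NA_def at_risk_def split by (subst sum.union_disjoint) auto
  also have "(\<Sum>i\<in>{i. i < n \<and> fst (xs i) = s \<and> snd (xs i) = j}. ?w i) =
      (\<Sum>i\<in>{i. i < n \<and> fst (xs i) = s \<and> snd (xs i) = j}. 1 / real (at_risk xs n s))"
    by (rule sum.cong) auto
  finally show ?thesis by (simp add: NA_incr_def events_at_def)
qed

lemma eventually_NA_at_left:
  "eventually (\<lambda>u. NA xs n j u = NA xs n j s - NA_incr xs n j s) (at_left s)"
proof -
  define s' where "s' = Max (insert (s - 1) {fst (xs i) |i. i < n \<and> fst (xs i) < s})"
  have "s' < s" unfolding s'_def by (subst Max_less_iff) auto
  from eventually_at_left_real[OF this] show ?thesis
  proof (rule eventually_mono)
    fix u assume u: "u \<in> {s'<..<s}"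
    have "fst (xs i) \<le> s'" if "i < n" "fst (xs i) < s" for i
      unfolding s'_def using that by (intro Max_ge) auto
    then have "{i. i < n \<and> fst (xs i) \<le> u \<and> snd (xs i) = j} = {i. i < n \<and> fst (xs i) < s \<and> snd (xs i) = j}"
      using u by force
    then show "NA xs n j u = NA xs n j s - NA_incr xs n j s"
      unfolding NA_eq_before_plus_incr[of xs n j s] by (simp add: NA_def at_risk_def)
  qed
qed

lemma tendsto_NA_at_left: "((\<lambda>u. NA xs n j u) \<longlongrightarrow> NA xs n j s - NA_incr xs n j s) (at_left s)"
  using eventually_NA_at_left by (rule tendsto_eventually)

lemma NAjump_eq:
  "NAjump xs n d s = mat (d+1) (d+1) (\<lambda>(i,k).
     if i = 0 then (if k = 0 then - NA_tot_incr xs n d s else NA_incr xs n k s) else 0)"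
proof (rule eq_matI)
  fix i k assume "i < dim_row (mat (d+1) (d+1) (\<lambda>(i,k).
     if i = 0 then (if k = 0 then - NA_tot_incr xs n d s else NA_incr xs n k s) else (0::real)))"
    "k < dim_col (mat (d+1) (d+1) (\<lambda>(i,k).
     if i = 0 then (if k = 0 then - NA_tot_incr xs n d s else NA_incr xs n k s) else (0::real)))"
  then have ik: "i < d+1" "k < d+1" by auto
  let ?jump = "if i = 0 then (if k = 0 then - NA_tot_incr xs n d s else NA_incr xs n k s) else 0"
  have "((\<lambda>u. \<Sum>j\<in>{1..d}. NA xs n j u) \<longlongrightarrow> (\<Sum>j\<in>{1..d}. NA xs n j s - NA_incr xs n j s)) (at_left s)"
    by (intro tendsto_sum tendsto_NA_at_left)
  then have "((\<lambda>u. - NA_tot xs n d u) \<longlongrightarrow> - NA_tot xs n d s - - NA_tot_incr xs n d s) (at_left s)"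
    unfolding NA_tot_def NA_tot_incr_def sum_subtractf using tendsto_minus by fastforce
  then have "((\<lambda>u. NAmat xs n d u $$ (i,k)) \<longlongrightarrow> NAmat xs n d s $$ (i,k) - ?jump) (at_left s)"
    using ik by (auto simp: NAmat_def intro: tendsto_NA_at_left)
  then have "left_lim (\<lambda>u. NAmat xs n d u $$ (i,k)) s = NAmat xs n d s $$ (i,k) - ?jump"
    unfolding left_lim_def by (rule tendsto_Lim[OF trivial_limit_at_left_real])
  then show "NAjump xs n d s $$ (i,k) = mat (d+1) (d+1) (\<lambda>(i,k).
     if i = 0 then (if k = 0 then - NA_tot_incr xs n d s else NA_incr xs n k s) else 0) $$ (i,k)"
    using ik by (simp add: NAjump_def)
qed (auto simp: NAjump_def)

definition first_row_mat :: "nat \<Rightarrow> real \<Rightarrow> (nat \<Rightarrow> real) \<Rightarrow> real mat" where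
  "first_row_mat d S F = mat (d+1) (d+1) (\<lambda>(i,k).
     if i = 0 then (if k = 0 then S else F k) else (if i = k then 1 else 0))"

lemma one_mat_eq_first_row_mat: "1\<^sub>m (d+1) = first_row_mat d 1 (\<lambda>_. 0)"
  by (rule eq_matI) (auto simp: first_row_mat_def)

lemma first_row_mat_mult:
  "first_row_mat d S F * (1\<^sub>m (d+1) + mat (d+1) (d+1) (\<lambda>(i,k). if i = 0 then (if k = 0 then - h else g k) else 0))
     = first_row_mat d (S * (1 - h)) (\<lambda>k. F k + S * g k)"
    (is "?A * ?B = ?C")
proof (rule eq_matI)
  fix i k assume "i < dim_row ?C" "k < dim_col ?C"
  then have ik: "i < d+1" "k < d+1" by (auto simp: first_row_mat_def)
  have "(?A * ?B) $$ (i,k) = (\<Sum>l\<in>{0..<d+1}. ?A $$ (i,l) * ?B $$ (l,k))"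
    using ik by (simp add: first_row_mat_def scalar_prod_def)
  also have "\<dots> = ?A $$ (i,k) + ?A $$ (i,0) * (if k = 0 then - h else g k)"
  proof -
    have "?A $$ (i,l) * ?B $$ (l,k) = (if l = k then ?A $$ (i,l) else 0) +
        (if l = 0 then ?A $$ (i,0) * (if k = 0 then - h else g k) else 0)" if "l < d+1" for l
      using that ik by (auto simp: algebra_simps)
    then show ?thesis using ik by (simp add: sum.distrib)
  qed
  also have "\<dots> = ?C $$ (i,k)"
    using ik by (auto simp: first_row_mat_def algebra_simps)
  finally show "(?A * ?B) $$ (i,k) = ?C $$ (i,k)" .
qed (auto simp: first_row_mat_def)

lemma foldl_NAjump_eq_first_row_mat:
  assumes "sorted_wrt (<) L"
  shows "foldl (\<lambda>A s. A * (1\<^sub>m (d+1) + NAjump xs n d s)) (1\<^sub>m (d+1)) L =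
    first_row_mat d (\<Prod>s\<in>set L. 1 - NA_tot_incr xs n d s)
      (\<lambda>k. \<Sum>s\<in>set L. (\<Prod>s'\<in>set L \<inter> {..<s}. 1 - NA_tot_incr xs n d s') * NA_incr xs n k s)"
  using assms
proof (induction L rule: rev_induct)
  case Nil
  show ?case using one_mat_eq_first_row_mat[of d] by simp
next
  case (snoc x L)
  have lt: "\<forall>y\<in>set L. y < x" and L: "sorted_wrt (<) L"
    using snoc.prems by (auto simp: sorted_wrt_append)
  then have x: "x \<notin> set L" "insert x (set L) \<inter> {..<x} = set L" by auto
  have "insert x (set L) \<inter> {..<s} = set L \<inter> {..<s}" if "s \<in> set L" for s
    using lt that by auto
  then have sums_L: "(\<Sum>s\<in>set L. (\<Prod>s'\<in>insert x (set L) \<inter> {..<s}. 1 - NA_tot_incr xs n d s') * NA_incr xs n k s) =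
      (\<Sum>s\<in>set L. (\<Prod>s'\<in>set L \<inter> {..<s}. 1 - NA_tot_incr xs n d s') * NA_incr xs n k s)" for k
    by (intro sum.cong) simp_all
  let ?P = "\<Prod>s\<in>set L. 1 - NA_tot_incr xs n d s"
  let ?F = "\<lambda>k. \<Sum>s\<in>set L. (\<Prod>s'\<in>set L \<inter> {..<s}. 1 - NA_tot_incr xs n d s') * NA_incr xs n k s"
  have "foldl (\<lambda>A s. A * (1\<^sub>m (d+1) + NAjump xs n d s)) (1\<^sub>m (d+1)) (L @ [x]) =
      first_row_mat d ?P ?F * (1\<^sub>m (d+1) + NAjump xs n d x)"
    using snoc.IH[OF L] by simp
  also have "\<dots> = first_row_mat d (?P * (1 - NA_tot_incr xs n d x)) (\<lambda>k. ?F k + ?P * NA_incr xs n k x)"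
    unfolding NAjump_eq by (rule first_row_mat_mult)
  finally show ?case
    using x by (simp add: sums_L) (simp add: algebra_simps)
qed

definition event_times :: "(nat \<Rightarrow> real \<times> nat) \<Rightarrow> nat \<Rightarrow> nat \<Rightarrow> real set" where
  "event_times xs n d = {fst (xs i) |i. i < n \<and> 0 < fst (xs i) \<and> snd (xs i) \<in> {1..d}}"

definition prodlim :: "(nat \<Rightarrow> real \<times> nat) \<Rightarrow> nat \<Rightarrow> nat \<Rightarrow> real set \<Rightarrow> real" where
  "prodlim xs n d A = (\<Prod>s\<in>A. 1 - NA_tot_incr xs n d s)"

definition AJ_surv :: "(nat \<Rightarrow> real \<times> nat) \<Rightarrow> nat \<Rightarrow> nat \<Rightarrow> real \<Rightarrow> real" where
  "AJ_surv xs n d t = prodlim xs n d (event_times xs n d \<inter> {..t})"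

definition AJ_subdist :: "(nat \<Rightarrow> real \<times> nat) \<Rightarrow> nat \<Rightarrow> nat \<Rightarrow> nat \<Rightarrow> real \<Rightarrow> real" where
  "AJ_subdist xs n d k t = (\<Sum>s\<in>event_times xs n d \<inter> {..t}.
     prodlim xs n d (event_times xs n d \<inter> {..<s}) * NA_incr xs n k s)"

lemma finite_event_times [simp]: "finite (event_times xs n d)"
  unfolding event_times_def by auto

lemma NA_incr_nonneg: "NA_incr xs n k s \<ge> 0"
  unfolding NA_incr_def by simp

lemma NA_incr_ne_0_iff: "NA_incr xs n k s \<noteq> 0 \<longleftrightarrow> (\<exists>i<n. fst (xs i) = s \<and> snd (xs i) = k)"
proof -
  have "events_at xs n k s > 0 \<longleftrightarrow> (\<exists>i<n. fst (xs i) = s \<and> snd (xs i) = k)"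
    unfolding events_at_def by (subst card_gt_0_iff) auto
  then show ?thesis
    unfolding NA_incr_def using at_risk_pos[of _ n s xs] by (auto simp: of_nat_0_less_iff[symmetric] simp del: of_nat_0_less_iff)
qed

lemma NA_jumps_eq: "NA_jumps xs n d t = event_times xs n d \<inter> {..t}"
proof -
  have "NAjump xs n d s \<noteq> 0\<^sub>m (d+1) (d+1) \<longleftrightarrow> (\<exists>k\<in>{1..d}. NA_incr xs n k s \<noteq> 0)" for s
  proof
    assume nz: "NAjump xs n d s \<noteq> 0\<^sub>m (d+1) (d+1)"
    show "\<exists>k\<in>{1..d}. NA_incr xs n k s \<noteq> 0"
    proof (rule ccontr)
      assume "\<not> ?thesis"
      then have "NAjump xs n d s = 0\<^sub>m (d+1) (d+1)"
        by (intro eq_matI) (auto simp: NAjump_eq NA_tot_incr_def)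
      with nz show False by contradiction
    qed
  next
    assume "\<exists>k\<in>{1..d}. NA_incr xs n k s \<noteq> 0"
    then obtain k where "k \<in> {1..d}" "NAjump xs n d s $$ (0,k) \<noteq> 0\<^sub>m (d+1) (d+1) $$ (0,k)"
      by (auto simp: NAjump_eq)
    then show "NAjump xs n d s \<noteq> 0\<^sub>m (d+1) (d+1)" by metis
  qed
  then show ?thesis
    unfolding NA_jumps_def event_times_def by (auto simp: NA_incr_ne_0_iff)
qed

lemma AJ_eq_first_row_mat: "AJ xs n d t = first_row_mat d (AJ_surv xs n d t) (\<lambda>k. AJ_subdist xs n d k t)"
proof -
  let ?J = "event_times xs n d \<inter> {..t}"
  have "?J \<inter> {..<s} = event_times xs n d \<inter> {..<s}" if "s \<in> ?J" for s
    using that by auto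
  then have F: "(\<Sum>s\<in>?J. (\<Prod>s'\<in>?J \<inter> {..<s}. 1 - NA_tot_incr xs n d s') * NA_incr xs n k s) =
      AJ_subdist xs n d k t" for k
    unfolding AJ_subdist_def prodlim_def by (intro sum.cong) simp_all
  have "AJ xs n d t = foldl (\<lambda>A s. A * (1\<^sub>m (d+1) + NAjump xs n d s)) (1\<^sub>m (d+1)) (sorted_list_of_set ?J)"
    unfolding AJ_def NA_jumps_eq ..
  also have "\<dots> = first_row_mat d (\<Prod>s\<in>?J. 1 - NA_tot_incr xs n d s)
      (\<lambda>k. \<Sum>s\<in>?J. (\<Prod>s'\<in>?J \<inter> {..<s}. 1 - NA_tot_incr xs n d s') * NA_incr xs n k s)"
    using foldl_NAjump_eq_first_row_mat[OF strict_sorted_list_of_set[of ?J]] by simp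
  finally show ?thesis
    unfolding F AJ_surv_def prodlim_def .
qed

lemma event_times_inter_atMost:
  "event_times xs n d \<inter> {..t} = (\<lambda>i. fst (xs i)) ` {i. i < n \<and> (0 < fst (xs i) \<and> snd (xs i) \<in> {1..d} \<and> fst (xs i) \<le> t)}"
  unfolding event_times_def by auto

lemma event_times_inter_lessThan:
  "event_times xs n d \<inter> {..<t} = (\<lambda>i. fst (xs i)) ` {i. i < n \<and> (0 < fst (xs i) \<and> snd (xs i) \<in> {1..d} \<and> fst (xs i) < t)}"
  unfolding event_times_def by auto

lemma NA_tot_incr_nonneg: "NA_tot_incr xs n d s \<ge> 0"
  unfolding NA_tot_incr_def by (simp add: sum_nonneg NA_incr_nonneg)

lemma sum_events_at_le_at_risk: "(\<Sum>j\<in>{1..d}. events_at xs n j s) \<le> at_risk xs n s"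
proof -
  have "(\<Sum>j\<in>{1..d}. events_at xs n j s) = card (\<Union>j\<in>{1..d}. {i. i < n \<and> fst (xs i) = s \<and> snd (xs i) = j})"
    unfolding events_at_def by (subst card_UN_disjoint) auto
  also have "\<dots> \<le> at_risk xs n s"
    unfolding at_risk_def by (intro card_mono) auto
  finally show ?thesis .
qed

lemma NA_tot_incr_le_1: "NA_tot_incr xs n d s \<le> 1"
proof (cases "at_risk xs n s = 0")
  case False
  have "real (\<Sum>j\<in>{1..d}. events_at xs n j s) \<le> real (at_risk xs n s)"
    by (simp only: of_nat_le_iff sum_events_at_le_at_risk)
  then show ?thesis
    using False by (simp add: NA_tot_incr_def NA_incr_def sum_divide_distrib[symmetric])
qed (simp add: NA_tot_incr_def NA_incr_def)

lemma prodlim_nonneg: "0 \<le> prodlim xs n d A"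
  unfolding prodlim_def by (intro prod_nonneg) (simp add: NA_tot_incr_le_1)

lemma prodlim_le_1: "prodlim xs n d A \<le> 1"
  unfolding prodlim_def by (intro prod_le_1) (simp_all add: NA_tot_incr_le_1 NA_tot_incr_nonneg)

lemma prodlim_ge: "finite A \<Longrightarrow> 1 - (\<Sum>s\<in>A. NA_tot_incr xs n d s) \<le> prodlim xs n d A"
  unfolding prodlim_def by (rule Weierstrass_prod_ineq) (simp_all add: NA_tot_incr_le_1 NA_tot_incr_nonneg)

lemma AJ_surv_nonneg: "0 \<le> AJ_surv xs n d t"
  unfolding AJ_surv_def by (rule prodlim_nonneg)

lemma prod_one_minus_telescope:
  fixes g :: "'a::linorder \<Rightarrow> 'b::comm_ring_1"
  assumes "finite A"
  shows "(\<Prod>s\<in>A. 1 - g s) = 1 - (\<Sum>s\<in>A. (\<Prod>s'\<in>A \<inter> {..<s}. 1 - g s') * g s)"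
  using assms
proof (induction A rule: finite_linorder_max_induct)
  case (insert b A)
  have b: "b \<notin> A" "insert b A \<inter> {..<b} = A"
    using insert.hyps(2) by auto
  have "insert b A \<inter> {..<s} = A \<inter> {..<s}" if "s \<in> A" for s
    using insert.hyps(2) that by auto
  then have "(\<Sum>s\<in>A. (\<Prod>s'\<in>insert b A \<inter> {..<s}. 1 - g s') * g s) = (\<Sum>s\<in>A. (\<Prod>s'\<in>A \<inter> {..<s}. 1 - g s') * g s)"
    by (intro sum.cong) simp_all
  with b show ?case
    using insert.hyps(1) insert.IH by (simp add: algebra_simps)
qed simp

lemma AJ_surv_plus_sum_AJ_subdist: "AJ_surv xs n d t + (\<Sum>k\<in>{1..d}. AJ_subdist xs n d k t) = 1"
proof -
  let ?J = "event_times xs n d \<inter> {..t}"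
  have "?J \<inter> {..<s} = event_times xs n d \<inter> {..<s}" if "s \<in> ?J" for s
    using that by auto
  then have "(\<Sum>k\<in>{1..d}. AJ_subdist xs n d k t) =
      (\<Sum>s\<in>?J. (\<Prod>s'\<in>?J \<inter> {..<s}. 1 - NA_tot_incr xs n d s') * NA_tot_incr xs n d s)"
    unfolding AJ_subdist_def NA_tot_incr_def prodlim_def
    by (subst sum.swap) (simp add: sum_distrib_left)
  also have "\<dots> = 1 - AJ_surv xs n d t"
    unfolding AJ_surv_def prodlim_def by (simp add: prod_one_minus_telescope)
  finally show ?thesis by simp
qed

lemma AJ_surv_eq: "AJ_surv xs n d t = 1 - (\<Sum>k\<in>{1..d}. AJ_subdist xs n d k t)"
  using AJ_surv_plus_sum_AJ_subdist[of xs n d t] by simp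

lemma AJ_subdist_at_0: "AJ_subdist xs n d k 0 = 0"
proof -
  have "event_times xs n d \<inter> {..0} = {}" unfolding event_times_def by auto
  then show ?thesis unfolding AJ_subdist_def by simp
qed

definition AJ_cell_incr :: "(nat \<Rightarrow> real \<times> nat) \<Rightarrow> nat \<Rightarrow> nat \<Rightarrow> nat \<Rightarrow> real \<Rightarrow> real \<Rightarrow> real" where
  "AJ_cell_incr xs n d k a b =
     (\<Sum>s\<in>event_times xs n d \<inter> {a<..<b}.
        prodlim xs n d (event_times xs n d \<inter> {a<..<b} \<inter> {..<s}) * NA_incr xs n k s)
     + prodlim xs n d (event_times xs n d \<inter> {a<..<b}) * NA_incr xs n k b"

lemma prodlim_union:
  "finite A \<Longrightarrow> finite B \<Longrightarrow> A \<inter> B = {} \<Longrightarrow> prodlim xs n d (A \<union> B) = prodlim xs n d A * prodlim xs n d B"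
  unfolding prodlim_def by (rule prod.union_disjoint)

lemma AJ_subdist_cell:
  assumes "0 \<le> a" "a < b" "k \<in> {1..d}"
  shows "AJ_subdist xs n d k b = AJ_subdist xs n d k a + AJ_surv xs n d a * AJ_cell_incr xs n d k a b"
proof -
  define J where "J = event_times xs n d"
  define A where "A = J \<inter> {a<..<b}"
  define g where "g s = prodlim xs n d (J \<inter> {..<s}) * NA_incr xs n k s" for s
  have J: "finite J" unfolding J_def by simp
  have split: "J \<inter> {..b} = (J \<inter> {..a}) \<union> A \<union> (J \<inter> {b})"
    unfolding A_def using assms by auto
  have "AJ_subdist xs n d k b = sum g (J \<inter> {..a}) + sum g A + sum g (J \<inter> {b})"
    unfolding AJ_subdist_def g_def[symmetric] J_def[symmetric] split using J assms
    by (subst sum.union_disjoint; (auto simp: A_def)?)+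
  moreover have "J \<inter> {..<s} = (J \<inter> {..a}) \<union> (A \<inter> {..<s})" if "s \<in> A \<union> {b}" for s
    using that assms unfolding A_def by auto
  then have prodlim_split: "prodlim xs n d (J \<inter> {..<s}) = AJ_surv xs n d a * prodlim xs n d (A \<inter> {..<s})"
    if "s \<in> A \<union> {b}" for s
    using that J by (simp add: AJ_surv_def J_def[symmetric] prodlim_union A_def disjoint_iff)
  then have "sum g A = AJ_surv xs n d a * (\<Sum>s\<in>A. prodlim xs n d (A \<inter> {..<s}) * NA_incr xs n k s)"
    unfolding g_def by (auto simp: sum_distrib_left intro!: sum.cong)
  moreover have "A \<inter> {..<b} = A"
    unfolding A_def by auto
  then have "g b = AJ_surv xs n d a * prodlim xs n d A * NA_incr xs n k b"
    using prodlim_split[of b] unfolding g_def by simp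
  moreover have "sum g (J \<inter> {b}) = g b"
  proof (cases "b \<in> J")
    case False
    then have "NA_incr xs n k b = 0"
      using assms NA_incr_ne_0_iff[of xs n k b] unfolding J_def event_times_def by auto
    with False show ?thesis by (simp add: g_def)
  qed simp
  ultimately show ?thesis
    unfolding AJ_cell_incr_def AJ_subdist_def J_def[symmetric] A_def[symmetric] g_def[symmetric]
    by (simp add: algebra_simps)
qed

(* The max 1 only matters when nobody is at risk at b; it does not affect the limit. *)
definition NA_cell_upper :: "(nat \<Rightarrow> real \<times> nat) \<Rightarrow> nat \<Rightarrow> nat \<Rightarrow> real \<Rightarrow> real \<Rightarrow> real" where
  "NA_cell_upper xs n k a b =
     real (events_between xs n k a b) / max 1 (real (at_risk xs n b)) + NA_incr xs n k b"

definition NA_cell_lower :: "(nat \<Rightarrow> real \<times> nat) \<Rightarrow> nat \<Rightarrow> nat \<Rightarrow> real \<Rightarrow> real \<Rightarrow> real" where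
  "NA_cell_lower xs n k a b =
     real (events_between xs n k a b) / real (at_risk_after xs n a) + NA_incr xs n k b"

definition NA_tot_open_upper :: "(nat \<Rightarrow> real \<times> nat) \<Rightarrow> nat \<Rightarrow> nat \<Rightarrow> real \<Rightarrow> real \<Rightarrow> real" where
  "NA_tot_open_upper xs n d a b =
     (\<Sum>k\<in>{1..d}. real (events_between xs n k a b) / max 1 (real (at_risk xs n b)))"

lemma sum_NA_incr_open_eq:
  assumes "0 \<le> a" "k \<in> {1..d}"
  shows "(\<Sum>s\<in>event_times xs n d \<inter> {a<..<b}. NA_incr xs n k s) =
    (\<Sum>i\<in>{i. i < n \<and> a < fst (xs i) \<and> fst (xs i) < b \<and> snd (xs i) = k}. 1 / real (at_risk xs n (fst (xs i))))"
proof -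
  define I where "I = {i. i < n \<and> a < fst (xs i) \<and> fst (xs i) < b \<and> snd (xs i) = k}"
  have "NA_incr xs n k s = (\<Sum>i\<in>{i \<in> I. fst (xs i) = s}. 1 / real (at_risk xs n (fst (xs i))))"
    if "s \<in> event_times xs n d \<inter> {a<..<b}" for s
  proof -
    have "{i \<in> I. fst (xs i) = s} = {i. i < n \<and> fst (xs i) = s \<and> snd (xs i) = k}"
      using that unfolding I_def by auto
    then show ?thesis unfolding NA_incr_def events_at_def by simp
  qed
  then have "(\<Sum>s\<in>event_times xs n d \<inter> {a<..<b}. NA_incr xs n k s) =
      (\<Sum>s\<in>event_times xs n d \<inter> {a<..<b}. \<Sum>i\<in>{i \<in> I. fst (xs i) = s}. 1 / real (at_risk xs n (fst (xs i))))"
    by (intro sum.cong) auto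
  also have "\<dots> = (\<Sum>i\<in>I. 1 / real (at_risk xs n (fst (xs i))))"
    using assms by (intro sum.group) (auto simp: I_def event_times_def)
  finally show ?thesis unfolding I_def .
qed

lemma sum_NA_incr_open_bounds:
  assumes "0 \<le> a" "k \<in> {1..d}"
  shows "real (events_between xs n k a b) / real (at_risk_after xs n a)
           \<le> (\<Sum>s\<in>event_times xs n d \<inter> {a<..<b}. NA_incr xs n k s)"
    and "(\<Sum>s\<in>event_times xs n d \<inter> {a<..<b}. NA_incr xs n k s)
           \<le> real (events_between xs n k a b) / max 1 (real (at_risk xs n b))"
proof -
  define I where "I = {i. i < n \<and> a < fst (xs i) \<and> fst (xs i) < b \<and> snd (xs i) = k}"
  have pos: "0 < at_risk xs n (fst (xs i))" if "i \<in> I" for i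
    using that at_risk_pos unfolding I_def by blast
  have "at_risk xs n (fst (xs i)) \<le> at_risk_after xs n a" if "i \<in> I" for i
    using that unfolding I_def at_risk_def at_risk_after_def by (intro card_mono) auto
  then have "(\<Sum>i\<in>I. 1 / real (at_risk_after xs n a)) \<le> (\<Sum>i\<in>I. 1 / real (at_risk xs n (fst (xs i))))"
    using pos by (intro sum_mono frac_le) auto
  then show "real (events_between xs n k a b) / real (at_risk_after xs n a)
      \<le> (\<Sum>s\<in>event_times xs n d \<inter> {a<..<b}. NA_incr xs n k s)"
    unfolding sum_NA_incr_open_eq[OF assms] I_def[symmetric] by (simp add: events_between_def I_def)
  have "at_risk xs n b \<le> at_risk xs n (fst (xs i))" if "i \<in> I" for i
    using that unfolding I_def at_risk_def by (intro card_mono) auto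
  then have "(\<Sum>i\<in>I. 1 / real (at_risk xs n (fst (xs i)))) \<le> (\<Sum>i\<in>I. 1 / max 1 (real (at_risk xs n b)))"
    using pos by (intro sum_mono frac_le) (auto simp: Suc_le_eq)
  then show "(\<Sum>s\<in>event_times xs n d \<inter> {a<..<b}. NA_incr xs n k s)
      \<le> real (events_between xs n k a b) / max 1 (real (at_risk xs n b))"
    unfolding sum_NA_incr_open_eq[OF assms] I_def[symmetric] by (simp add: events_between_def I_def)
qed

lemma AJ_cell_incr_nonneg: "0 \<le> AJ_cell_incr xs n d k a b"
  unfolding AJ_cell_incr_def
  by (intro add_nonneg_nonneg sum_nonneg mult_nonneg_nonneg prodlim_nonneg NA_incr_nonneg)

lemma sum_AJ_cell_incr_le_1: "(\<Sum>k\<in>{1..d}. AJ_cell_incr xs n d k a b) \<le> 1"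
proof -
  let ?A = "event_times xs n d \<inter> {a<..<b}"
  have "(\<Sum>k\<in>{1..d}. AJ_cell_incr xs n d k a b) =
      (\<Sum>s\<in>?A. prodlim xs n d (?A \<inter> {..<s}) * NA_tot_incr xs n d s) + prodlim xs n d ?A * NA_tot_incr xs n d b"
    unfolding AJ_cell_incr_def NA_tot_incr_def sum.distrib sum_distrib_left by (subst sum.swap) simp
  also have "(\<Sum>s\<in>?A. prodlim xs n d (?A \<inter> {..<s}) * NA_tot_incr xs n d s) = 1 - prodlim xs n d ?A"
    unfolding prodlim_def by (simp add: prod_one_minus_telescope)
  finally show ?thesis
    using mult_left_le[OF NA_tot_incr_le_1[of xs n d b] prodlim_nonneg[of xs n d ?A]] by simp
qed

lemma AJ_cell_incr_between:
  fixes xs :: "nat \<Rightarrow> real \<times> nat" and n d k :: nat and a b :: real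
  defines "A \<equiv> event_times xs n d \<inter> {a<..<b}"
  shows "(1 - (\<Sum>s\<in>A. NA_tot_incr xs n d s)) * ((\<Sum>s\<in>A. NA_incr xs n k s) + NA_incr xs n k b)
           \<le> AJ_cell_incr xs n d k a b"
    and "AJ_cell_incr xs n d k a b \<le> (\<Sum>s\<in>A. NA_incr xs n k s) + NA_incr xs n k b"
proof -
  let ?x = "\<Sum>s\<in>A. NA_tot_incr xs n d s"
  have fin: "finite A" unfolding A_def by simp
  have "1 - ?x \<le> prodlim xs n d B" if "B \<subseteq> A" for B
  proof -
    have "(\<Sum>s\<in>B. NA_tot_incr xs n d s) \<le> ?x"
      using that fin by (intro sum_mono2) (auto simp: NA_tot_incr_nonneg)
    then show ?thesis using prodlim_ge[of B xs n d] finite_subset[OF that fin] by linarith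
  qed
  then have "(1 - ?x) * NA_incr xs n k s \<le> prodlim xs n d B * NA_incr xs n k s" if "B \<subseteq> A" for B s
    using that by (intro mult_right_mono NA_incr_nonneg)
  moreover have "prodlim xs n d B * NA_incr xs n k s \<le> NA_incr xs n k s" for B s
    by (intro mult_left_le_one_le prodlim_nonneg prodlim_le_1 NA_incr_nonneg)
  ultimately show "(1 - ?x) * ((\<Sum>s\<in>A. NA_incr xs n k s) + NA_incr xs n k b) \<le> AJ_cell_incr xs n d k a b"
    and "AJ_cell_incr xs n d k a b \<le> (\<Sum>s\<in>A. NA_incr xs n k s) + NA_incr xs n k b"
    unfolding AJ_cell_incr_def A_def[symmetric] distrib_left sum_distrib_left
    by (auto intro!: add_mono sum_mono)
qed

lemma AJ_cell_incr_le_NA_cell_upper: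
  assumes "0 \<le> a" "k \<in> {1..d}"
  shows "AJ_cell_incr xs n d k a b \<le> NA_cell_upper xs n k a b"
  using AJ_cell_incr_between(2)[of xs n d k a b] sum_NA_incr_open_bounds(2)[OF assms, where xs=xs and n=n and b=b]
  unfolding NA_cell_upper_def by linarith

lemma NA_cell_lower_le_AJ_cell_incr:
  assumes "0 \<le> a" "k \<in> {1..d}"
  shows "(1 - NA_tot_open_upper xs n d a b) * NA_cell_lower xs n k a b \<le> AJ_cell_incr xs n d k a b"
proof -
  let ?A = "event_times xs n d \<inter> {a<..<b}"
  let ?x = "\<Sum>s\<in>?A. NA_tot_incr xs n d s"
  have x: "?x \<le> NA_tot_open_upper xs n d a b"
    unfolding NA_tot_open_upper_def NA_tot_incr_def using assms(1)
    by (subst sum.swap) (intro sum_mono sum_NA_incr_open_bounds(2); simp)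
  have lower: "0 \<le> NA_cell_lower xs n k a b"
    "NA_cell_lower xs n k a b \<le> (\<Sum>s\<in>?A. NA_incr xs n k s) + NA_incr xs n k b"
    using sum_NA_incr_open_bounds(1)[OF assms, where xs=xs and n=n and b=b] unfolding NA_cell_lower_def
    by (auto simp: NA_incr_nonneg)
  show ?thesis
  proof (cases "NA_tot_open_upper xs n d a b \<le> 1")
    case True
    with x lower have "(1 - NA_tot_open_upper xs n d a b) * NA_cell_lower xs n k a b
        \<le> (1 - ?x) * ((\<Sum>s\<in>?A. NA_incr xs n k s) + NA_incr xs n k b)"
      by (intro mult_mono) auto
    then show ?thesis using AJ_cell_incr_between(1) by (rule order_trans)
  next
    case False
    with lower have "(1 - NA_tot_open_upper xs n d a b) * NA_cell_lower xs n k a b \<le> 0"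
      by (simp add: mult_nonpos_nonneg)
    then show ?thesis using AJ_cell_incr_nonneg by (rule order_trans)
  qed
qed

section \<open>Convergence in probability\<close>

lemma isCont_pair_eps_box:
  fixes f :: "real \<Rightarrow> real \<Rightarrow> real"
  assumes "isCont (\<lambda>p. f (fst p) (snd p)) (x, y)" "e > 0"
  obtains \<eta> where "\<eta> > 0" "\<And>u v. \<bar>u - x\<bar> \<le> \<eta> \<Longrightarrow> \<bar>v - y\<bar> \<le> \<eta> \<Longrightarrow> \<bar>f u v - f x y\<bar> < e"
proof -
  from assms obtain \<delta> where "\<delta> > 0" and \<delta>: "\<forall>p. dist p (x, y) < \<delta> \<longrightarrow> dist (f (fst p) (snd p)) (f x y) < e"
    unfolding continuous_at_eps_delta fst_conv snd_conv by blast
  have box: "\<bar>f u v - f x y\<bar> < e" if "\<bar>u - x\<bar> \<le> \<delta> / 3" "\<bar>v - y\<bar> \<le> \<delta> / 3" for u v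
  proof -
    have "dist (u, v) (x, y) \<le> \<bar>u - x\<bar> + \<bar>v - y\<bar>"
      using norm_Pair_le[of "u - x" "v - y"] by (simp add: dist_norm)
    also have "\<dots> < \<delta>"
      using that \<open>\<delta> > 0\<close> by linarith
    finally show ?thesis
      using \<delta> by (auto simp: dist_real_def)
  qed
  show ?thesis
    using \<open>\<delta> > 0\<close> box by (intro that[of "\<delta> / 3"]) auto
qed

context prob_space
begin

lemma measure_mono_superset:
  assumes "B \<in> sets M" "A \<subseteq> B"
  shows "measure M A \<le> measure M B"
proof (cases "A \<in> sets M")
  case True
  with assms show ?thesis by (intro finite_measure_mono)
qed (simp add: measure_notin_sets)

lemma consistentI_dominated:
  assumes "\<And>e. e > 0 \<Longrightarrow> \<exists>g. g \<longlonglongrightarrow> 0 \<and>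
             eventually (\<lambda>n. measure M {\<omega>\<in>space M. e < \<bar>X n \<omega> - x\<bar>} \<le> g n) sequentially"
  shows "consistent M X x"
  unfolding consistent_def
proof (intro allI impI)
  fix e :: real assume "e > 0"
  from assms[OF this] obtain g where g: "g \<longlonglongrightarrow> 0"
    "eventually (\<lambda>n. measure M {\<omega>\<in>space M. e < \<bar>X n \<omega> - x\<bar>} \<le> g n) sequentially"
    by blast
  show "(\<lambda>n. measure M {\<omega>\<in>space M. e < \<bar>X n \<omega> - x\<bar>}) \<longlonglongrightarrow> 0"
    by (rule real_tendsto_sandwich[OF _ g(2) tendsto_const g(1)]) simp
qed

lemma consistent_tendsto: "c \<longlonglongrightarrow> x \<Longrightarrow> consistent M (\<lambda>n \<omega>. c n) x"
proof (rule consistentI_dominated)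
  fix e :: real assume "c \<longlonglongrightarrow> x" "e > 0"
  from tendstoD[OF this] have "eventually (\<lambda>n. \<bar>c n - x\<bar> < e) sequentially"
    by (simp add: dist_real_def)
  then have "eventually (\<lambda>n. measure M {\<omega>\<in>space M. e < \<bar>c n - x\<bar>} \<le> 0) sequentially"
    by eventually_elim auto
  then show "\<exists>g. g \<longlonglongrightarrow> 0 \<and> eventually (\<lambda>n. measure M {\<omega>\<in>space M. e < \<bar>c n - x\<bar>} \<le> g n) sequentially"
    by (intro exI[of _ "\<lambda>_. 0"]) auto
qed

lemma consistent_const: "consistent M (\<lambda>n \<omega>. c) c"
  using consistent_tendsto[OF tendsto_const] .

lemma consistent_continuous2:
  fixes f :: "real \<Rightarrow> real \<Rightarrow> real"
  assumes X: "consistent M X x" and Y: "consistent M Y y"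
    and [measurable]: "\<And>n. X n \<in> borel_measurable M" "\<And>n. Y n \<in> borel_measurable M"
    and f: "isCont (\<lambda>p. f (fst p) (snd p)) (x, y)"
  shows "consistent M (\<lambda>n \<omega>. f (X n \<omega>) (Y n \<omega>)) (f x y)"
proof (rule consistentI_dominated)
  fix e :: real assume "e > 0"
  obtain \<eta> where "\<eta> > 0" and close: "\<And>u v. \<bar>u - x\<bar> \<le> \<eta> \<Longrightarrow> \<bar>v - y\<bar> \<le> \<eta> \<Longrightarrow> \<bar>f u v - f x y\<bar> < e"
    by (rule isCont_pair_eps_box[OF f \<open>e > 0\<close>]) auto
  let ?g = "\<lambda>n. measure M {\<omega>\<in>space M. \<eta> < \<bar>X n \<omega> - x\<bar>} + measure M {\<omega>\<in>space M. \<eta> < \<bar>Y n \<omega> - y\<bar>}"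
  have "?g \<longlonglongrightarrow> 0 + 0"
    using X[unfolded consistent_def, rule_format, OF \<open>\<eta> > 0\<close>]
      Y[unfolded consistent_def, rule_format, OF \<open>\<eta> > 0\<close>] by (rule tendsto_add)
  moreover have "measure M {\<omega>\<in>space M. e < \<bar>f (X n \<omega>) (Y n \<omega>) - f x y\<bar>} \<le> ?g n" for n
  proof -
    have "{\<omega>\<in>space M. e < \<bar>f (X n \<omega>) (Y n \<omega>) - f x y\<bar>} \<subseteq>
        {\<omega>\<in>space M. \<eta> < \<bar>X n \<omega> - x\<bar>} \<union> {\<omega>\<in>space M. \<eta> < \<bar>Y n \<omega> - y\<bar>}"
    proof
      fix \<omega> assume \<omega>: "\<omega> \<in> {\<omega>\<in>space M. e < \<bar>f (X n \<omega>) (Y n \<omega>) - f x y\<bar>}"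
      show "\<omega> \<in> {\<omega>\<in>space M. \<eta> < \<bar>X n \<omega> - x\<bar>} \<union> {\<omega>\<in>space M. \<eta> < \<bar>Y n \<omega> - y\<bar>}"
      proof (rule ccontr)
        assume "\<not> ?thesis"
        with \<omega> have "\<bar>X n \<omega> - x\<bar> \<le> \<eta>" "\<bar>Y n \<omega> - y\<bar> \<le> \<eta>" by auto
        from close[OF this] \<omega> show False by simp
      qed
    qed
    then have "measure M {\<omega>\<in>space M. e < \<bar>f (X n \<omega>) (Y n \<omega>) - f x y\<bar>} \<le>
        measure M ({\<omega>\<in>space M. \<eta> < \<bar>X n \<omega> - x\<bar>} \<union> {\<omega>\<in>space M. \<eta> < \<bar>Y n \<omega> - y\<bar>})"
      by (intro measure_mono_superset) measurable
    also have "\<dots> \<le> ?g n"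
      by (rule measure_subadditive) measurable
    finally show ?thesis .
  qed
  ultimately show "\<exists>g. g \<longlonglongrightarrow> 0 \<and>
      eventually (\<lambda>n. measure M {\<omega>\<in>space M. e < \<bar>f (X n \<omega>) (Y n \<omega>) - f x y\<bar>} \<le> g n) sequentially"
    by (intro exI[of _ ?g] conjI always_eventually allI) simp_all
qed

lemma consistent_add:
  "consistent M X x \<Longrightarrow> consistent M Y y \<Longrightarrow> (\<And>n. X n \<in> borel_measurable M) \<Longrightarrow> (\<And>n. Y n \<in> borel_measurable M) \<Longrightarrow>
    consistent M (\<lambda>n \<omega>. X n \<omega> + Y n \<omega>) (x + y)"
  by (rule consistent_continuous2[where f = "(+)"]) (auto intro!: continuous_intros)

lemma consistent_diff:
  "consistent M X x \<Longrightarrow> consistent M Y y \<Longrightarrow> (\<And>n. X n \<in> borel_measurable M) \<Longrightarrow> (\<And>n. Y n \<in> borel_measurable M) \<Longrightarrow>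
    consistent M (\<lambda>n \<omega>. X n \<omega> - Y n \<omega>) (x - y)"
  by (rule consistent_continuous2[where f = "(-)"]) (auto intro!: continuous_intros)

lemma consistent_mult:
  "consistent M X x \<Longrightarrow> consistent M Y y \<Longrightarrow> (\<And>n. X n \<in> borel_measurable M) \<Longrightarrow> (\<And>n. Y n \<in> borel_measurable M) \<Longrightarrow>
    consistent M (\<lambda>n \<omega>. X n \<omega> * Y n \<omega>) (x * y)"
  by (rule consistent_continuous2[where f = "(*)"]) (auto intro!: continuous_intros)

lemma consistent_divide:
  "consistent M X x \<Longrightarrow> consistent M Y y \<Longrightarrow> (\<And>n. X n \<in> borel_measurable M) \<Longrightarrow> (\<And>n. Y n \<in> borel_measurable M) \<Longrightarrow>
    y \<noteq> 0 \<Longrightarrow> consistent M (\<lambda>n \<omega>. X n \<omega> / Y n \<omega>) (x / y)"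
  by (rule consistent_continuous2[where f = "(/)"]) (auto intro!: continuous_intros)

lemma consistent_max:
  "consistent M X x \<Longrightarrow> consistent M Y y \<Longrightarrow> (\<And>n. X n \<in> borel_measurable M) \<Longrightarrow> (\<And>n. Y n \<in> borel_measurable M) \<Longrightarrow>
    consistent M (\<lambda>n \<omega>. max (X n \<omega>) (Y n \<omega>)) (max x y)"
  by (rule consistent_continuous2[where f = max]) (auto intro!: continuous_intros)

lemma consistent_abs:
  assumes "consistent M X x" "\<And>n. X n \<in> borel_measurable M"
  shows "consistent M (\<lambda>n \<omega>. \<bar>X n \<omega>\<bar>) \<bar>x\<bar>"
  using consistent_continuous2[OF assms(1) consistent_const assms(2), where f = "\<lambda>u v. \<bar>u\<bar>"]
  by (auto intro!: continuous_intros)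

lemma consistent_sum:
  assumes "finite K" "\<And>k. k \<in> K \<Longrightarrow> consistent M (X k) (x k)"
    "\<And>k n. k \<in> K \<Longrightarrow> X k n \<in> borel_measurable M"
  shows "consistent M (\<lambda>n \<omega>. \<Sum>k\<in>K. X k n \<omega>) (\<Sum>k\<in>K. x k)"
  using assms
proof (induction K rule: finite_induct)
  case (insert k K)
  then show ?case by (simp add: consistent_add)
qed (simp add: consistent_const)

lemma consistent_limit_nonpos:
  assumes "consistent M Z z" "\<And>n \<omega>. \<omega> \<in> space M \<Longrightarrow> Z n \<omega> \<le> 0"
  shows "z \<le> 0"
proof (rule ccontr)
  assume "\<not> z \<le> 0"
  then have "z / 2 > 0" by simp
  have "z / 2 < \<bar>Z n \<omega> - z\<bar>" if "\<omega> \<in> space M" for n \<omega>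
    using assms(2)[OF that, of n] \<open>\<not> z \<le> 0\<close> by linarith
  then have "{\<omega>\<in>space M. z / 2 < \<bar>Z n \<omega> - z\<bar>} = space M" for n
    by blast
  then have "(\<lambda>n. 1) \<longlonglongrightarrow> (0::real)"
    using assms(1)[unfolded consistent_def, rule_format, OF \<open>z / 2 > 0\<close>] by (simp add: prob_space)
  then show False
    using LIMSEQ_unique[OF tendsto_const] by fastforce
qed

lemma consistent_limit_mono:
  assumes "consistent M X x" "consistent M Y y"
    and "\<And>n. X n \<in> borel_measurable M" "\<And>n. Y n \<in> borel_measurable M"
    and "\<And>n \<omega>. \<omega> \<in> space M \<Longrightarrow> X n \<omega> \<le> Y n \<omega>"
  shows "x \<le> y"
  using consistent_limit_nonpos[OF consistent_diff[OF assms(1-4)]] assms(5) by simp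

lemma consistentI_bound:
  assumes "\<And>e. e > 0 \<Longrightarrow> \<exists>B b. consistent M B b \<and> b < e \<and> (\<forall>n. B n \<in> borel_measurable M) \<and>
             (\<forall>n. \<forall>\<omega>\<in>space M. \<bar>Z n \<omega> - z\<bar> \<le> B n \<omega>)"
  shows "consistent M Z z"
proof (rule consistentI_dominated)
  fix e :: real assume "e > 0"
  then have "e / 2 > 0" by simp
  from assms[OF this] obtain B b where B: "consistent M B b" "b < e / 2"
    and [measurable]: "\<And>n. B n \<in> borel_measurable M"
    and bound: "\<And>n \<omega>. \<omega> \<in> space M \<Longrightarrow> \<bar>Z n \<omega> - z\<bar> \<le> B n \<omega>"
    by blast
  have "measure M {\<omega>\<in>space M. e < \<bar>Z n \<omega> - z\<bar>} \<le> measure M {\<omega>\<in>space M. e / 2 < \<bar>B n \<omega> - b\<bar>}" for n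
  proof (rule measure_mono_superset)
    show "{\<omega>\<in>space M. e < \<bar>Z n \<omega> - z\<bar>} \<subseteq> {\<omega>\<in>space M. e / 2 < \<bar>B n \<omega> - b\<bar>}"
      using bound[of _ n] B(2) by fastforce
  qed measurable
  moreover have "(\<lambda>n. measure M {\<omega>\<in>space M. e / 2 < \<bar>B n \<omega> - b\<bar>}) \<longlonglongrightarrow> 0"
    using B(1)[unfolded consistent_def, rule_format, OF \<open>e / 2 > 0\<close>] .
  ultimately show "\<exists>g. g \<longlonglongrightarrow> 0 \<and> eventually (\<lambda>n. measure M {\<omega>\<in>space M. e < \<bar>Z n \<omega> - z\<bar>} \<le> g n) sequentially"
    by (intro exI conjI always_eventually allI)
qed

(* A 0 = 0 covers n = 0, where both sides are quotients by zero. *)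
lemma consistent_ratio_of_averages:
  assumes "consistent M (\<lambda>n \<omega>. A n \<omega> / real n) \<alpha>" "consistent M (\<lambda>n \<omega>. B n \<omega> / real n) \<beta>"
    and "\<And>n. A n \<in> borel_measurable M" "\<And>n. B n \<in> borel_measurable M"
    and "\<And>\<omega>. A 0 \<omega> = 0" "\<beta> \<noteq> 0"
  shows "consistent M (\<lambda>n \<omega>. A n \<omega> / B n \<omega>) (\<alpha> / \<beta>)"
proof -
  have "(\<lambda>n \<omega>. A n \<omega> / B n \<omega>) = (\<lambda>n \<omega>. (A n \<omega> / real n) / (B n \<omega> / real n))"
  proof (intro ext)
    fix n \<omega>
    show "A n \<omega> / B n \<omega> = (A n \<omega> / real n) / (B n \<omega> / real n)"
      using assms(5) by (cases "n = 0") auto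
  qed
  then show ?thesis
    using consistent_divide[OF assms(1,2) _ _ assms(6)] assms(3,4) by simp
qed

lemma Hoeffding_ineq_iid_indicator:
  fixes X :: "nat \<Rightarrow> 'a \<Rightarrow> 'b" and n :: nat
  assumes indep: "indep_vars (\<lambda>_. N) X UNIV"
    and distr: "\<And>i. distr M N (X i) = distr M N Z" and [measurable]: "Z \<in> measurable M N" "S \<in> sets N"
  shows "Hoeffding_ineq_iid M {..<n} (\<lambda>i \<omega>. indicator S (X i \<omega>)) (\<lambda>\<omega>. indicator S (Z \<omega>)) 0 (1::real)"
  unfolding Hoeffding_ineq_iid_def iid_interval_bounded_random_variables_def
    iid_interval_bounded_random_variables_axioms_def
proof (intro conjI allI impI)
  have [measurable]: "X i \<in> measurable M N" for i
    using indep unfolding indep_vars_def2 by auto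
  show "indep_vars (\<lambda>_. borel) (\<lambda>i \<omega>. indicator S (X i \<omega>)) {..<n}"
    by (rule indep_vars_subset[OF indep_vars_compose2[OF indep]]) auto
  fix i
  have "distr M borel (\<lambda>\<omega>. indicator S (X i \<omega>) :: real) = distr (distr M N (X i)) borel (indicator S)"
    by (subst distr_distr) (auto simp: comp_def)
  also have "\<dots> = distr M borel (\<lambda>\<omega>. indicator S (Z \<omega>))"
    unfolding distr by (subst distr_distr) (auto simp: comp_def)
  finally show "distr M borel (\<lambda>\<omega>. indicator S (X i \<omega>)) = distr M borel (\<lambda>\<omega>. indicator S (Z \<omega>) :: real)" .
qed (auto simp: prob_space_axioms)

lemma consistent_empirical_frequency:
  assumes indep: "indep_vars (\<lambda>_. N) X UNIV"
    and distr: "\<And>i. distr M N (X i) = distr M N Z" and Z[measurable]: "Z \<in> measurable M N"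
    and S[measurable]: "S \<in> sets N"
  shows "consistent M (\<lambda>n \<omega>. real (card {i. i < n \<and> X i \<omega> \<in> S}) / real n) (prob {\<omega>\<in>space M. Z \<omega> \<in> S})"
proof (rule consistentI_dominated)
  fix e :: real assume "e > 0"
  let ?p = "prob {\<omega>\<in>space M. Z \<omega> \<in> S}"
  have [measurable]: "X i \<in> measurable M N" for i
    using indep unfolding indep_vars_def2 by auto
  have freq: "real (card {i. i < n \<and> X i \<omega> \<in> S}) = (\<Sum>i\<in>{..<n}. indicator S (X i \<omega>))" for n \<omega>
    unfolding real_card_eq_sum by (intro sum.cong) (auto simp: indicator_def)
  have "(\<lambda>\<omega>. indicator S (Z \<omega>) :: real) = indicator (Z -` S)"
    by (auto simp: indicator_def)
  then have mean: "expectation (\<lambda>\<omega>. indicator S (Z \<omega>)) = ?p"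
    by (simp add: integral_indicator Int_def conj_commute vimage_def)
  have bound: "measure M {\<omega>\<in>space M. e < \<bar>real (card {i. i < n \<and> X i \<omega> \<in> S}) / real n - ?p\<bar>}
      \<le> 2 * exp (- 2 * real n * e\<^sup>2)" if "n \<ge> 1" for n
  proof -
    from Hoeffding_ineq_iid.Hoeffding_ineq_abs_ge'[OF Hoeffding_ineq_iid_indicator[OF indep distr Z S], of e] \<open>e > 0\<close> that
    have "prob {\<omega>\<in>space M. e \<le> \<bar>(\<Sum>i\<in>{..<n}. indicator S (X i \<omega>)) / real n - ?p\<bar>} \<le> 2 * exp (- 2 * real n * e\<^sup>2)"
      by (simp add: mean lessThan_empty_iff)
    moreover have "measure M {\<omega>\<in>space M. e < \<bar>real (card {i. i < n \<and> X i \<omega> \<in> S}) / real n - ?p\<bar>}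
        \<le> prob {\<omega>\<in>space M. e \<le> \<bar>(\<Sum>i\<in>{..<n}. indicator S (X i \<omega>)) / real n - ?p\<bar>}"
      unfolding freq by (intro measure_mono_superset) auto
    ultimately show ?thesis by linarith
  qed
  show "\<exists>g. g \<longlonglongrightarrow> 0 \<and> eventually (\<lambda>n.
      measure M {\<omega>\<in>space M. e < \<bar>real (card {i. i < n \<and> X i \<omega> \<in> S}) / real n - ?p\<bar>} \<le> g n) sequentially"
  proof (intro exI[of _ "\<lambda>n. 2 * exp (- 2 * real n * e\<^sup>2)"] conjI)
    show "(\<lambda>n. 2 * exp (- 2 * real n * e\<^sup>2)) \<longlonglongrightarrow> 0"
      using \<open>e > 0\<close> by real_asymp
    show "eventually (\<lambda>n. measure M {\<omega>\<in>space M. e < \<bar>real (card {i. i < n \<and> X i \<omega> \<in> S}) / real n - ?p\<bar>}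
        \<le> 2 * exp (- 2 * real n * e\<^sup>2)) sequentially"
      using eventually_ge_at_top[of 1] by eventually_elim (rule bound)
  qed
qed

end

section \<open>Hazard increments over a cell\<close>

definition surv_left :: "'a measure \<Rightarrow> ('a \<Rightarrow> real) \<Rightarrow> real \<Rightarrow> real" where
  "surv_left M Z s = measure M {\<omega>\<in>space M. s \<le> Z \<omega>}"

definition open_mass :: "'a measure \<Rightarrow> ('a \<Rightarrow> real) \<Rightarrow> real \<Rightarrow> real \<Rightarrow> real" where
  "open_mass M Z a b = measure M {\<omega>\<in>space M. a < Z \<omega> \<and> Z \<omega> < b}"

definition subdist_open :: "'a measure \<Rightarrow> ('a \<Rightarrow> real) \<Rightarrow> ('a \<Rightarrow> nat) \<Rightarrow> nat \<Rightarrow> real \<Rightarrow> real \<Rightarrow> real" where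
  "subdist_open M Z Y k a b = measure M {\<omega>\<in>space M. a < Z \<omega> \<and> Z \<omega> < b \<and> Y \<omega> = k}"

definition subdist_atom :: "'a measure \<Rightarrow> ('a \<Rightarrow> real) \<Rightarrow> ('a \<Rightarrow> nat) \<Rightarrow> nat \<Rightarrow> real \<Rightarrow> real" where
  "subdist_atom M Z Y k b = measure M {\<omega>\<in>space M. Z \<omega> = b \<and> Y \<omega> = k}"

definition haz_lower :: "'a measure \<Rightarrow> ('a \<Rightarrow> real) \<Rightarrow> ('a \<Rightarrow> nat) \<Rightarrow> nat \<Rightarrow> real \<Rightarrow> real \<Rightarrow> real" where
  "haz_lower M Z Y k a b = subdist_open M Z Y k a b / surv M Z a + subdist_atom M Z Y k b / surv_left M Z b"

definition haz_upper :: "'a measure \<Rightarrow> ('a \<Rightarrow> real) \<Rightarrow> ('a \<Rightarrow> nat) \<Rightarrow> nat \<Rightarrow> real \<Rightarrow> real \<Rightarrow> real" where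
  "haz_upper M Z Y k a b = subdist_open M Z Y k a b / surv_left M Z b + subdist_atom M Z Y k b / surv_left M Z b"

definition subdist_measure :: "'a measure \<Rightarrow> ('a \<Rightarrow> real) \<Rightarrow> ('a \<Rightarrow> nat) \<Rightarrow> nat \<Rightarrow> real measure" where
  "subdist_measure M Z Y k = distr (restrict_space M {\<omega>\<in>space M. Y \<omega> = k}) borel Z"

lemma divide_diff_le_sq:
  fixes x c p q :: real
  assumes "0 < c" "c \<le> q" "q \<le> p" "0 \<le> x"
  shows "x / q - x / p \<le> x * (p - q) / c\<^sup>2"
proof -
  have "x / q - x / p = x * (p - q) / (p * q)"
    using assms by (simp add: field_simps)
  also have "\<dots> \<le> x * (p - q) / c\<^sup>2"
    using assms by (intro divide_left_mono mult_nonneg_nonneg) (auto simp: power2_eq_square intro: mult_mono)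
  finally show ?thesis .
qed

context prob_space
begin

lemma cdf_distr:
  assumes [measurable]: "Z \<in> borel_measurable M"
  shows "cdf (distr M borel Z) x = measure M {\<omega>\<in>space M. Z \<omega> \<le> x}"
  unfolding cdf_def by (subst measure_distr) (auto intro!: arg_cong[where f="measure M"])

lemma finite_borel_measure_distr: "Z \<in> borel_measurable M \<Longrightarrow> finite_borel_measure (distr M borel Z)"
  using real_distribution_distr by (simp add: real_distribution.finite_borel_measure_M)

lemma measure_distr_lessThan:
  fixes Z :: "'a \<Rightarrow> real"
  assumes [measurable]: "Z \<in> borel_measurable M"
  shows "measure (distr M borel Z) {..<s} = measure M {\<omega>\<in>space M. Z \<omega> < s}"
  by (subst measure_distr) (auto intro!: arg_cong[where f="measure M"] simp: lessThan_borel)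

lemma left_lim_surv:
  assumes [measurable]: "Z \<in> borel_measurable M"
  shows "left_lim (surv M Z) s = surv_left M Z s"
proof -
  let ?\<mu> = "distr M borel Z"
  have surv: "surv M Z x = 1 - cdf ?\<mu> x" for x
  proof -
    have "{\<omega>\<in>space M. x < Z \<omega>} = space M - {\<omega>\<in>space M. Z \<omega> \<le> x}" by auto
    then show ?thesis unfolding surv_def cdf_distr[OF assms] by (simp add: prob_compl)
  qed
  have "(surv M Z \<longlongrightarrow> 1 - measure ?\<mu> {..<s}) (at_left s)"
    unfolding surv[abs_def]
    by (intro tendsto_diff tendsto_const finite_borel_measure.cdf_at_left[OF finite_borel_measure_distr[OF assms]])
  then have "left_lim (surv M Z) s = 1 - measure ?\<mu> {..<s}"
    unfolding left_lim_def by (rule tendsto_Lim[OF trivial_limit_at_left_real])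
  also have "{\<omega>\<in>space M. s \<le> Z \<omega>} = space M - {\<omega>\<in>space M. Z \<omega> < s}" by auto
  then have "1 - measure ?\<mu> {..<s} = surv_left M Z s"
    unfolding surv_left_def measure_distr_lessThan[OF assms] by (simp add: prob_compl)
  finally show ?thesis .
qed

lemma borel_measurable_surv_left [measurable]:
  assumes [measurable]: "Z \<in> borel_measurable M"
  shows "surv_left M Z \<in> borel_measurable borel"
proof -
  have "mono (\<lambda>s. - surv_left M Z s)"
  proof (rule monoI)
    fix x y :: real assume "x \<le> y"
    then have "surv_left M Z y \<le> surv_left M Z x"
      unfolding surv_left_def by (intro finite_measure_mono) auto
    then show "- surv_left M Z x \<le> - surv_left M Z y" by simp
  qed
  then have "(\<lambda>s. - surv_left M Z s) \<in> borel_measurable borel"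
    by (rule borel_measurable_mono)
  then have "(\<lambda>s. - (- surv_left M Z s)) \<in> borel_measurable borel"
    by measurable
  then show ?thesis by simp
qed

lemma measure_subdist_measure:
  assumes [measurable]: "Z \<in> borel_measurable M" "Y \<in> measurable M (count_space UNIV)" "A \<in> sets borel"
  shows "measure (subdist_measure M Z Y k) A = measure M {\<omega>\<in>space M. Z \<omega> \<in> A \<and> Y \<omega> = k}"
proof -
  have [measurable]: "{\<omega>\<in>space M. Y \<omega> = k} \<in> sets M" by measurable
  have Z: "Z \<in> restrict_space M {\<omega>\<in>space M. Y \<omega> = k} \<rightarrow>\<^sub>M borel"
    by (rule measurable_restrict_space1) measurable
  have "emeasure (subdist_measure M Z Y k) A =
      emeasure (restrict_space M {\<omega>\<in>space M. Y \<omega> = k}) (Z -` A \<inter> space (restrict_space M {\<omega>\<in>space M. Y \<omega> = k}))"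
    unfolding subdist_measure_def by (rule emeasure_distr[OF Z assms(3)])
  also have "\<dots> = emeasure M (Z -` A \<inter> space (restrict_space M {\<omega>\<in>space M. Y \<omega> = k}))"
    by (rule emeasure_restrict_space) (auto simp: space_restrict_space)
  also have "Z -` A \<inter> space (restrict_space M {\<omega>\<in>space M. Y \<omega> = k}) = {\<omega>\<in>space M. Z \<omega> \<in> A \<and> Y \<omega> = k}"
    by (auto simp: space_restrict_space)
  finally show ?thesis by (simp add: measure_def)
qed

lemma finite_borel_measure_subdist_measure:
  assumes [measurable]: "Z \<in> borel_measurable M" "Y \<in> measurable M (count_space UNIV)"
  shows "finite_borel_measure (subdist_measure M Z Y k)"
proof -
  have "finite_measure (restrict_space M {\<omega>\<in>space M. Y \<omega> = k})"
    by (intro finite_measure_restrict_space finite_measure_axioms) measurable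
  then have "finite_measure (subdist_measure M Z Y k)"
    unfolding subdist_measure_def
    by (rule finite_measure.finite_measure_distr) (rule measurable_restrict_space1, measurable)
  then show ?thesis
    unfolding finite_borel_measure_def finite_borel_measure_axioms_def subdist_measure_def by simp
qed

lemma interval_measure_subdist:
  assumes Z: "Z \<in> borel_measurable M" and Y: "Y \<in> measurable M (count_space UNIV)"
  shows "interval_measure (subdist M Z Y k) = subdist_measure M Z Y k"
proof -
  interpret N: finite_borel_measure "subdist_measure M Z Y k"
    by (rule finite_borel_measure_subdist_measure[OF Z Y])
  have cdf: "cdf (subdist_measure M Z Y k) = subdist M Z Y k"
    unfolding cdf_def subdist_def by (rule ext) (subst measure_subdist_measure[OF Z Y], auto)
  have "finite_borel_measure (interval_measure (cdf (subdist_measure M Z Y k)))"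
    by (rule finite_borel_measure_interval_measure[OF N.cdf_nondecreasing N.cdf_is_right_cont
          N.cdf_lim_at_bot N.cdf_lim_at_top]) auto
  moreover have "cdf (interval_measure (cdf (subdist_measure M Z Y k))) = cdf (subdist_measure M Z Y k)"
    by (rule cdf_interval_measure[OF N.cdf_nondecreasing N.cdf_is_right_cont N.cdf_lim_at_bot])
  ultimately have "interval_measure (cdf (subdist_measure M Z Y k)) = subdist_measure M Z Y k"
    by (rule cdf_unique'[OF _ N.finite_borel_measure_axioms])
  then show ?thesis unfolding cdf .
qed

lemma cumhaz_eq_integral:
  assumes "Z \<in> borel_measurable M" "Y \<in> measurable M (count_space UNIV)"
  shows "cumhaz M Z Y k t = (LINT s:{0<..t}|subdist_measure M Z Y k. 1 / surv_left M Z s)"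
  unfolding cumhaz_def interval_measure_subdist[OF assms] left_lim_surv[OF assms(1)] ..

lemma surv_left_le_surv:
  assumes [measurable]: "Z \<in> borel_measurable M" and "a < b"
  shows "surv_left M Z b \<le> surv M Z a"
  unfolding surv_left_def surv_def using assms(2) by (intro finite_measure_mono) auto

lemma surv_minus_surv_left:
  assumes [measurable]: "Z \<in> borel_measurable M" and "a < b"
  shows "surv M Z a - surv_left M Z b = open_mass M Z a b"
proof -
  have split: "{\<omega>\<in>space M. a < Z \<omega>} = {\<omega>\<in>space M. a < Z \<omega> \<and> Z \<omega> < b} \<union> {\<omega>\<in>space M. b \<le> Z \<omega>}"
    using assms(2) by auto
  have "surv M Z a = open_mass M Z a b + surv_left M Z b"
    unfolding surv_def open_mass_def surv_left_def split by (subst finite_measure_Union) auto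
  then show ?thesis by simp
qed

lemma subdist_diff_eq:
  assumes [measurable]: "Z \<in> borel_measurable M" "Y \<in> measurable M (count_space UNIV)" and "a < b"
  shows "subdist M Z Y k b - subdist M Z Y k a = subdist_open M Z Y k a b + subdist_atom M Z Y k b"
proof -
  have split: "{\<omega>\<in>space M. Z \<omega> \<le> b \<and> Y \<omega> = k} = {\<omega>\<in>space M. Z \<omega> \<le> a \<and> Y \<omega> = k} \<union>
      ({\<omega>\<in>space M. a < Z \<omega> \<and> Z \<omega> < b \<and> Y \<omega> = k} \<union> {\<omega>\<in>space M. Z \<omega> = b \<and> Y \<omega> = k})"
    using assms(3) by auto
  have "subdist M Z Y k b = subdist M Z Y k a + (subdist_open M Z Y k a b + subdist_atom M Z Y k b)"
    unfolding subdist_def subdist_open_def subdist_atom_def split using assms(3)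
    by (subst finite_measure_Union; (subst finite_measure_Union)?) auto
  then show ?thesis by simp
qed

lemma subdist_mono:
  assumes [measurable]: "Z \<in> borel_measurable M" "Y \<in> measurable M (count_space UNIV)" and "a \<le> b"
  shows "subdist M Z Y k a \<le> subdist M Z Y k b"
  unfolding subdist_def using assms(3) by (intro finite_measure_mono) auto

lemma set_integrable_inverse_surv_left:
  assumes [measurable]: "Z \<in> borel_measurable M" "Y \<in> measurable M (count_space UNIV)"
    and "surv_left M Z b > 0" "A \<in> sets borel" "A \<subseteq> {..b}"
  shows "set_integrable (subdist_measure M Z Y k) A (\<lambda>s. 1 / surv_left M Z s)"
proof -
  interpret N: finite_borel_measure "subdist_measure M Z Y k"
    by (rule finite_borel_measure_subdist_measure) fact+
  have "\<bar>1 / surv_left M Z s\<bar> \<le> 1 / surv_left M Z b" if "s \<le> b" for s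
  proof -
    have "surv_left M Z b \<le> surv_left M Z s"
      unfolding surv_left_def using that by (intro finite_measure_mono) auto
    then show ?thesis using assms(3) by (simp add: frac_le)
  qed
  then have "AE s in subdist_measure M Z Y k. norm (indicator A s *\<^sub>R (1 / surv_left M Z s)) \<le> 1 / surv_left M Z b"
    using assms(3,5) by (intro AE_I2) (auto simp: indicator_def)
  moreover have "(\<lambda>s. indicator A s *\<^sub>R (1 / surv_left M Z s)) \<in> borel_measurable (subdist_measure M Z Y k)"
    using assms(4) by (simp add: measurable_cong_sets[OF N.M_is_borel refl])
  ultimately show ?thesis
    unfolding set_integrable_def by (intro N.integrable_const_bound)
qed

lemma cumhaz_diff_eq:
  assumes Z[measurable]: "Z \<in> borel_measurable M" and Y[measurable]: "Y \<in> measurable M (count_space UNIV)"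
    and "0 \<le> a" "a < b" and "surv_left M Z b > 0"
  shows "cumhaz M Z Y k b - cumhaz M Z Y k a =
    (LINT s:{a<..<b}|subdist_measure M Z Y k. 1 / surv_left M Z s) + subdist_atom M Z Y k b / surv_left M Z b"
proof -
  let ?N = "subdist_measure M Z Y k" and ?f = "\<lambda>s. 1 / surv_left M Z s"
  interpret N: finite_borel_measure ?N
    by (rule finite_borel_measure_subdist_measure[OF Z Y])
  have int: "set_integrable ?N A ?f" if "A \<in> sets borel" "A \<subseteq> {..b}" for A
    using set_integrable_inverse_surv_left[OF Z Y assms(5) that] .
  have split: "{0<..b} = {0<..a} \<union> ({a<..<b} \<union> {b})"
    using assms(3,4) by auto
  have "(LINT s:{a<..<b} \<union> {b}|?N. ?f s) = (LINT s:{a<..<b}|?N. ?f s) + (LINT s:{b}|?N. ?f s)"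
    by (rule set_integral_Un) (use assms(4) in \<open>auto intro!: int\<close>)
  moreover have "(LINT s:{0<..a} \<union> ({a<..<b} \<union> {b})|?N. ?f s) =
      (LINT s:{0<..a}|?N. ?f s) + (LINT s:{a<..<b} \<union> {b}|?N. ?f s)"
    by (rule set_integral_Un) (use assms(4) in \<open>auto intro!: int\<close>)
  ultimately have "(LINT s:{0<..b}|?N. ?f s) = (LINT s:{0<..a}|?N. ?f s) + ((LINT s:{a<..<b}|?N. ?f s) + (LINT s:{b}|?N. ?f s))"
    unfolding split by simp
  moreover have "(LINT s:{b}|?N. ?f s) = (LINT s:{b}|?N. ?f b)"
    unfolding set_lebesgue_integral_def by (intro Bochner_Integration.integral_cong) (auto simp: indicator_def)
  moreover have "\<dots> = measure ?N {b} * ?f b"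
    by (subst set_integral_const) (auto simp: N.M_is_borel N.emeasure_real)
  moreover have "measure ?N {b} = subdist_atom M Z Y k b"
    unfolding subdist_atom_def by (subst measure_subdist_measure[OF Z Y]) auto
  ultimately show ?thesis
    unfolding cumhaz_eq_integral[OF Z Y] by simp
qed

lemma integral_inverse_surv_left_bounds:
  assumes Z[measurable]: "Z \<in> borel_measurable M" and Y[measurable]: "Y \<in> measurable M (count_space UNIV)"
    and "a < b" and "surv_left M Z b > 0"
  shows "subdist_open M Z Y k a b / surv M Z a \<le> (LINT s:{a<..<b}|subdist_measure M Z Y k. 1 / surv_left M Z s)"
    and "(LINT s:{a<..<b}|subdist_measure M Z Y k. 1 / surv_left M Z s) \<le> subdist_open M Z Y k a b / surv_left M Z b"
proof -
  let ?N = "subdist_measure M Z Y k" and ?f = "\<lambda>s. 1 / surv_left M Z s"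
  interpret N: finite_borel_measure ?N
    by (rule finite_borel_measure_subdist_measure[OF Z Y])
  have int: "set_integrable ?N {a<..<b} ?f"
    by (rule set_integrable_inverse_surv_left[OF Z Y assms(4)]) auto
  have "measure ?N {a<..<b} = subdist_open M Z Y k a b"
    unfolding subdist_open_def by (subst measure_subdist_measure[OF Z Y]) auto
  then have const: "(LINT s:{a<..<b}|?N. c) = subdist_open M Z Y k a b * c" for c
    by (subst set_integral_const) (auto simp: N.M_is_borel N.emeasure_real)
  have const_int: "set_integrable ?N {a<..<b} (\<lambda>_. c)" for c :: real
    unfolding set_integrable_def
    by (rule N.integrable_const_bound[where B = "\<bar>c\<bar>"]) (auto simp: indicator_def N.M_is_borel cong: measurable_cong_sets)
  have le: "surv_left M Z b \<le> surv_left M Z s" "surv_left M Z s \<le> surv M Z a" if "s \<in> {a<..<b}" for s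
    using that unfolding surv_left_def surv_def by (auto intro!: finite_measure_mono)
  have bounds: "1 / surv M Z a \<le> ?f s" "?f s \<le> 1 / surv_left M Z b" if "s \<in> {a<..<b}" for s
  proof -
    from le[OF that] assms(4) have "0 < surv_left M Z s" by linarith
    with le[OF that] assms(4) show "1 / surv M Z a \<le> ?f s" "?f s \<le> 1 / surv_left M Z b"
      by (auto intro!: frac_le)
  qed
  have "(LINT s:{a<..<b}|?N. 1 / surv M Z a) \<le> (LINT s:{a<..<b}|?N. ?f s)"
    by (rule set_integral_mono[OF const_int int]) (rule bounds(1))
  then show "subdist_open M Z Y k a b / surv M Z a \<le> (LINT s:{a<..<b}|?N. ?f s)"
    unfolding const by simp
  have "(LINT s:{a<..<b}|?N. ?f s) \<le> (LINT s:{a<..<b}|?N. 1 / surv_left M Z b)"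
    by (rule set_integral_mono[OF int const_int]) (rule bounds(2))
  then show "(LINT s:{a<..<b}|?N. ?f s) \<le> subdist_open M Z Y k a b / surv_left M Z b"
    unfolding const by simp
qed

lemma cumhaz_cell_bounds:
  assumes "Z \<in> borel_measurable M" "Y \<in> measurable M (count_space UNIV)"
    and "0 \<le> a" "a < b" "surv_left M Z b > 0"
  shows "haz_lower M Z Y k a b \<le> cumhaz M Z Y k b - cumhaz M Z Y k a"
    and "cumhaz M Z Y k b - cumhaz M Z Y k a \<le> haz_upper M Z Y k a b"
  using integral_inverse_surv_left_bounds[OF assms(1,2,4,5), of k]
  unfolding haz_lower_def haz_upper_def cumhaz_diff_eq[OF assms] by simp_all

lemma cumhaz_cell_approx:
  assumes Z[measurable]: "Z \<in> borel_measurable M" and Y[measurable]: "Y \<in> measurable M (count_space UNIV)"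
    and "0 \<le> a" "a < b" "0 < c" "c \<le> surv_left M Z b"
  shows "\<bar>cumhaz M Z Y k b - cumhaz M Z Y k a - (subdist M Z Y k b - subdist M Z Y k a) / surv M Z a\<bar>
    \<le> (subdist M Z Y k b - subdist M Z Y k a) * open_mass M Z a b / c\<^sup>2"
proof -
  let ?qN = "subdist_open M Z Y k a b" and ?qA = "subdist_atom M Z Y k b"
  let ?SA = "surv M Z a" and ?SB = "surv_left M Z b"
  have SB: "c \<le> ?SB" "?SB \<le> ?SA"
    using assms(6) surv_left_le_surv[OF Z assms(4)] by auto
  have q: "0 \<le> ?qN" "0 \<le> ?qA"
    unfolding subdist_open_def subdist_atom_def by auto
  note bounds = cumhaz_cell_bounds[OF Z Y assms(3,4), of k]
  have "?qA / ?SA \<le> ?qA / ?SB"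
    using q SB assms(5) by (intro divide_left_mono) auto
  then have "(?qN + ?qA) / ?SA \<le> cumhaz M Z Y k b - cumhaz M Z Y k a"
    using bounds(1) SB assms(5) unfolding haz_lower_def by (simp add: add_divide_distrib)
  moreover have "cumhaz M Z Y k b - cumhaz M Z Y k a - (?qN + ?qA) / ?SA \<le> (?qN + ?qA) / ?SB - (?qN + ?qA) / ?SA"
    using bounds(2) SB assms(5) unfolding haz_upper_def by (simp add: add_divide_distrib)
  moreover have "\<dots> \<le> (?qN + ?qA) * (?SA - ?SB) / c\<^sup>2"
    using q SB assms(5) by (intro divide_diff_le_sq) auto
  ultimately show ?thesis
    using SB assms(5)
    unfolding subdist_diff_eq[OF Z Y assms(4)] surv_minus_surv_left[OF Z assms(4)] by simp
qed

lemma haz_upper_minus_lower_le: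
  assumes Z[measurable]: "Z \<in> borel_measurable M" and Y[measurable]: "Y \<in> measurable M (count_space UNIV)"
    and "a < b" "0 < c" "c \<le> surv_left M Z b"
  shows "haz_upper M Z Y k a b - haz_lower M Z Y k a b
    \<le> (subdist M Z Y k b - subdist M Z Y k a) * open_mass M Z a b / c\<^sup>2"
proof -
  let ?qN = "subdist_open M Z Y k a b"
  have "haz_upper M Z Y k a b - haz_lower M Z Y k a b = ?qN / surv_left M Z b - ?qN / surv M Z a"
    unfolding haz_upper_def haz_lower_def by simp
  also have "\<dots> \<le> ?qN * (surv M Z a - surv_left M Z b) / c\<^sup>2"
    using assms(4,5) surv_left_le_surv[OF Z assms(3)]
    by (intro divide_diff_le_sq) (auto simp: subdist_open_def)
  also have "\<dots> \<le> (subdist M Z Y k b - subdist M Z Y k a) * open_mass M Z a b / c\<^sup>2"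
    unfolding subdist_diff_eq[OF Z Y assms(3)] surv_minus_surv_left[OF Z assms(3)]
    by (intro divide_right_mono mult_right_mono) (auto simp: subdist_atom_def open_mass_def)
  finally show ?thesis .
qed

lemma haz_lower_nonneg: "0 \<le> haz_lower M Z Y k a b"
  unfolding haz_lower_def subdist_open_def subdist_atom_def surv_def surv_left_def by simp

lemma haz_upper_le:
  assumes Z[measurable]: "Z \<in> borel_measurable M" and Y[measurable]: "Y \<in> measurable M (count_space UNIV)"
    and "a < b" "0 < c" "c \<le> surv_left M Z b"
  shows "haz_upper M Z Y k a b \<le> (subdist M Z Y k b - subdist M Z Y k a) / c"
  unfolding haz_upper_def add_divide_distrib[symmetric] subdist_diff_eq[OF Z Y assms(3)]
  using assms(4,5) by (intro divide_left_mono) (auto simp: subdist_open_def subdist_atom_def)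

lemma cumhaz_at_0: "cumhaz M Z Y k 0 = 0"
  unfolding cumhaz_def by (simp add: set_lebesgue_integral_def)

lemma open_mass_le:
  fixes Z :: "'a \<Rightarrow> real"
  assumes [measurable]: "Z \<in> borel_measurable M" and "a < b"
    and "\<And>x. a < x \<Longrightarrow> x < b \<Longrightarrow> measure M {\<omega>\<in>space M. Z \<omega> \<le> x} - measure M {\<omega>\<in>space M. Z \<omega> \<le> a} \<le> \<epsilon>"
  shows "open_mass M Z a b \<le> \<epsilon>"
proof -
  let ?\<mu> = "distr M borel Z"
  have "((\<lambda>x. cdf ?\<mu> x - cdf ?\<mu> a) \<longlongrightarrow> measure ?\<mu> {..<b} - cdf ?\<mu> a) (at_left b)"
    by (intro tendsto_diff tendsto_const finite_borel_measure.cdf_at_left[OF finite_borel_measure_distr]) fact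
  moreover have "eventually (\<lambda>x. cdf ?\<mu> x - cdf ?\<mu> a \<le> \<epsilon>) (at_left b)"
    using eventually_at_left_real[OF assms(2)] by eventually_elim (use assms(3) in \<open>auto simp: cdf_distr\<close>)
  ultimately have "measure ?\<mu> {..<b} - cdf ?\<mu> a \<le> \<epsilon>"
    by (intro tendsto_upperbound) (auto simp: trivial_limit_at_left_real)
  moreover have split: "{\<omega>\<in>space M. Z \<omega> < b} = {\<omega>\<in>space M. Z \<omega> \<le> a} \<union> {\<omega>\<in>space M. a < Z \<omega> \<and> Z \<omega> < b}"
    using assms(2) by auto
  have "measure ?\<mu> {..<b} = measure M {\<omega>\<in>space M. Z \<omega> \<le> a} + open_mass M Z a b"
    unfolding measure_distr_lessThan[OF assms(1)] split open_mass_def by (subst finite_measure_Union) auto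
  ultimately show ?thesis by (simp add: cdf_distr)
qed

end

section \<open>Fine partitions of an interval\<close>

lemma chain_le:
  fixes g :: "nat \<Rightarrow> real"
  assumes "\<forall>i<K. g i < g (Suc i)" "i \<le> j" "j \<le> K"
  shows "g i \<le> g j"
  using assms(2,3)
proof (induction j)
  case (Suc j)
  show ?case
  proof (cases "i = Suc j")
    case False
    then have "g i \<le> g j" using Suc by simp
    also have "g j \<le> g (Suc j)" using assms(1) Suc.prems by (simp add: less_imp_le Suc_le_eq)
    finally show ?thesis .
  qed simp
qed simp

lemma first_crossing:
  fixes \<Phi> :: "real \<Rightarrow> real"
  assumes rc: "\<And>x. continuous (at_right x) \<Phi>" and "a \<le> t" "\<Phi> a + \<epsilon> \<le> \<Phi> t" "\<epsilon> > 0"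
  obtains q where "a < q" "q \<le> t" "\<Phi> a + \<epsilon> \<le> \<Phi> q" "\<And>x. a \<le> x \<Longrightarrow> x < q \<Longrightarrow> \<Phi> x < \<Phi> a + \<epsilon>"
proof -
  define S where "S = {x. a \<le> x \<and> x \<le> t \<and> \<Phi> a + \<epsilon> \<le> \<Phi> x}"
  define q where "q = Inf S"
  have "t \<in> S" using assms(2,3) by (simp add: S_def)
  have bdd: "bdd_below S" unfolding S_def by (rule bdd_belowI[of _ a]) auto
  have "a \<le> q" "q \<le> t"
    using \<open>t \<in> S\<close> bdd unfolding q_def by (auto intro!: cInf_greatest cInf_lower simp: S_def)
  have below: "\<Phi> x < \<Phi> a + \<epsilon>" if "a \<le> x" "x < q" for x
  proof -
    have "x \<notin> S" using that cInf_lower[OF _ bdd] unfolding q_def by force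
    with that \<open>q \<le> t\<close> show ?thesis by (auto simp: S_def)
  qed
  have crossed: "\<Phi> a + \<epsilon> \<le> \<Phi> q"
  proof (rule ccontr)
    assume not_crossed: "\<not> \<Phi> a + \<epsilon> \<le> \<Phi> q"
    then have "eventually (\<lambda>y. \<Phi> y < \<Phi> a + \<epsilon>) (at_right q)"
      using rc[of q] by (intro order_tendstoD(2)) (auto simp: continuous_within)
    then obtain b where "b > q" and b: "\<And>y. q < y \<Longrightarrow> y < b \<Longrightarrow> \<Phi> y < \<Phi> a + \<epsilon>"
      unfolding eventually_at_right[of q "q + 1", simplified] by blast
    then obtain s where "s \<in> S" "s < b"
      using cInf_less_iff[of S b] \<open>t \<in> S\<close> bdd unfolding q_def by blast
    moreover have "q \<le> s" using cInf_lower[OF \<open>s \<in> S\<close> bdd] unfolding q_def .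
    ultimately show False
      using b[of s] not_crossed by (cases "s = q") (auto simp: S_def)
  qed
  moreover have "a \<noteq> q" using crossed \<open>\<epsilon> > 0\<close> by auto
  ultimately show ?thesis
    using \<open>a \<le> q\<close> \<open>q \<le> t\<close> below by (intro that[of q]) auto
qed

definition fine_partition :: "(real \<Rightarrow> real) \<Rightarrow> real \<Rightarrow> real \<Rightarrow> real \<Rightarrow> nat \<Rightarrow> (nat \<Rightarrow> real) \<Rightarrow> bool" where
  "fine_partition \<Phi> \<epsilon> a t K g \<longleftrightarrow> g 0 = a \<and> g K = t \<and> (\<forall>i<K. g i < g (Suc i)) \<and>
     (\<forall>i<K. \<forall>x. g i < x \<and> x < g (Suc i) \<longrightarrow> \<Phi> x - \<Phi> (g i) \<le> \<epsilon>)"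

lemma fine_partition_single_cell:
  assumes "mono \<Phi>" "a \<le> t" "\<Phi> t < \<Phi> a + \<epsilon>"
  shows "\<exists>K g. fine_partition \<Phi> \<epsilon> a t K g"
proof (cases "a = t")
  case True
  then show ?thesis
    unfolding fine_partition_def by (intro exI[of _ 0] exI[of _ "\<lambda>_. t"]) simp
next
  case False
  have "\<Phi> x - \<Phi> a \<le> \<epsilon>" if "x < t" for x
    using assms(1,3) \<open>x < t\<close> by (auto dest: monoD[of _ x t])
  then show ?thesis
    unfolding fine_partition_def using assms(2) False
    by (intro exI[of _ 1] exI[of _ "\<lambda>i. if i = 0 then a else t"]) auto
qed

lemma fine_partition_prepend:
  assumes "a < q" "\<And>x. a < x \<Longrightarrow> x < q \<Longrightarrow> \<Phi> x - \<Phi> a \<le> \<epsilon>" "fine_partition \<Phi> \<epsilon> q t K g"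
  shows "fine_partition \<Phi> \<epsilon> a t (Suc K) (case_nat a g)"
  using assms unfolding fine_partition_def by (auto simp: less_Suc_eq_0_disj)

lemma fine_partition_exists:
  fixes \<Phi> :: "real \<Rightarrow> real"
  assumes mono: "mono \<Phi>" and rc: "\<And>x. continuous (at_right x) \<Phi>" and "\<epsilon> > 0" "a \<le> t"
  shows "\<exists>K g. fine_partition \<Phi> \<epsilon> a t K g"
proof -
  have "\<exists>K g. fine_partition \<Phi> \<epsilon> a t K g" if "a \<le> t" "\<Phi> t - \<Phi> a \<le> real m * \<epsilon>" for m a
    using that
  proof (induction m arbitrary: a)
    case 0
    then show ?case using fine_partition_single_cell[OF mono] \<open>\<epsilon> > 0\<close> by simp
  next
    case (Suc m)
    show ?case
    proof (cases "\<Phi> t < \<Phi> a + \<epsilon>")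
      case False
      then obtain q where q: "a < q" "q \<le> t" "\<Phi> a + \<epsilon> \<le> \<Phi> q" "\<And>x. a \<le> x \<Longrightarrow> x < q \<Longrightarrow> \<Phi> x < \<Phi> a + \<epsilon>"
        using first_crossing[OF rc \<open>a \<le> t\<close> _ \<open>\<epsilon> > 0\<close>] by (metis not_less)
      have "\<exists>K g. fine_partition \<Phi> \<epsilon> q t K g"
        using q(2,3) Suc.prems(2) by (intro Suc.IH) (auto simp: algebra_simps)
      moreover have "\<Phi> x - \<Phi> a \<le> \<epsilon>" if "a < x" "x < q" for x
        using q(4)[OF less_imp_le[OF that(1)] that(2)] by simp
      ultimately show ?thesis
        using fine_partition_prepend[OF q(1)] by blast
    qed (use fine_partition_single_cell[OF mono] Suc.prems in auto)
  qed
  moreover obtain m :: nat where "(\<Phi> t - \<Phi> a) / \<epsilon> \<le> real m"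
    using real_arch_simple by blast
  then have "\<Phi> t - \<Phi> a \<le> real m * \<epsilon>"
    using \<open>\<epsilon> > 0\<close> by (simp add: field_simps)
  ultimately show ?thesis
    using \<open>a \<le> t\<close> by blast
qed

section \<open>The censored competing risks model\<close>

lemma first_occurrences:
  fixes f :: "nat \<Rightarrow> 'b" and n :: nat and P :: "nat \<Rightarrow> bool"
  defines "R \<equiv> {i. i < n \<and> P i \<and> (\<forall>j<i. P j \<longrightarrow> f j \<noteq> f i)}"
  shows "inj_on f R" and "f ` R = f ` {i. i < n \<and> P i}"
proof -
  show "inj_on f R"
  proof (rule inj_onI)
    fix i j assume ij: "i \<in> R" "j \<in> R" "f i = f j"
    show "i = j"
    proof (rule ccontr)
      assume "i \<noteq> j"
      then have "i < j \<or> j < i" by arith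
      then show False using ij unfolding R_def by auto
    qed
  qed
  show "f ` R = f ` {i. i < n \<and> P i}"
  proof
    show "f ` {i. i < n \<and> P i} \<subseteq> f ` R"
    proof
      fix y assume "y \<in> f ` {i. i < n \<and> P i}"
      then obtain i where i: "i < n" "P i" "y = f i" by auto
      define m where "m = (LEAST m. P m \<and> f m = f i)"
      have m: "P m \<and> f m = f i"
        unfolding m_def by (rule LeastI[of _ i]) (use i in auto)
      have "m \<le> i"
        unfolding m_def by (rule Least_le) (use i in auto)
      have "\<not> (P j \<and> f j = f i)" if "j < m" for j
        using not_less_Least[of j "\<lambda>m. P m \<and> f m = f i"] that unfolding m_def by blast
      then have "m \<in> R" unfolding R_def using m \<open>m \<le> i\<close> i by auto
      then show "y \<in> f ` R" using m i by (auto intro!: image_eqI[of _ f m])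
    qed
  qed (auto simp: R_def)
qed

lemma sum_image_first_occurrences:
  fixes f :: "nat \<Rightarrow> 'b" and G :: "'b \<Rightarrow> 'c::comm_monoid_add"
  shows "(\<Sum>s\<in>f ` {i. i < n \<and> P i}. G s) = (\<Sum>i<n. if P i \<and> (\<forall>j<i. P j \<longrightarrow> f j \<noteq> f i) then G (f i) else 0)"
proof -
  let ?R = "{i. i < n \<and> P i \<and> (\<forall>j<i. P j \<longrightarrow> f j \<noteq> f i)}"
  have "(\<Sum>s\<in>f ` {i. i < n \<and> P i}. G s) = (\<Sum>s\<in>f ` ?R. G s)"
    using first_occurrences(2)[of f n P] by simp
  also have "\<dots> = (\<Sum>i\<in>?R. G (f i))"
    by (rule sum.reindex_cong[OF first_occurrences(1)]) auto
  also have "?R = {..<n} \<inter> {i. P i \<and> (\<forall>j<i. P j \<longrightarrow> f j \<noteq> f i)}"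
    by auto
  finally show ?thesis by (simp add: sum.inter_restrict)
qed

lemma prod_image_first_occurrences:
  fixes f :: "nat \<Rightarrow> 'b" and G :: "'b \<Rightarrow> 'c::comm_monoid_mult"
  shows "(\<Prod>s\<in>f ` {i. i < n \<and> P i}. G s) = (\<Prod>i<n. if P i \<and> (\<forall>j<i. P j \<longrightarrow> f j \<noteq> f i) then G (f i) else 1)"
proof -
  let ?R = "{i. i < n \<and> P i \<and> (\<forall>j<i. P j \<longrightarrow> f j \<noteq> f i)}"
  have "(\<Prod>s\<in>f ` {i. i < n \<and> P i}. G s) = (\<Prod>s\<in>f ` ?R. G s)"
    using first_occurrences(2)[of f n P] by simp
  also have "\<dots> = (\<Prod>i\<in>?R. G (f i))"
    by (rule prod.reindex_cong[OF first_occurrences(1)]) auto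
  also have "?R = {..<n} \<inter> {i. P i \<and> (\<forall>j<i. P j \<longrightarrow> f j \<noteq> f i)}"
    by auto
  finally show ?thesis by (simp add: prod.inter_restrict)
qed

lemma Pmat_eq_first_row_mat: "Pmat M T D d t = first_row_mat d (surv M T t) (\<lambda>k. subdist M T D k t)"
  unfolding Pmat_def first_row_mat_def ..

lemma Hmat_eq_iff:
  "Hmat M Z Y d t = Hmat M Z' Y' d t \<longleftrightarrow> (\<forall>k\<in>{1..d}. cumhaz M Z Y k t = cumhaz M Z' Y' k t)"
proof
  assume eq: "Hmat M Z Y d t = Hmat M Z' Y' d t"
  show "\<forall>k\<in>{1..d}. cumhaz M Z Y k t = cumhaz M Z' Y' k t"
  proof
    fix k assume "k \<in> {1..d}"
    moreover have "Hmat M Z Y d t $$ (0,k) = Hmat M Z' Y' d t $$ (0,k)" using eq by simp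
    ultimately show "cumhaz M Z Y k t = cumhaz M Z' Y' k t" by (simp add: Hmat_def)
  qed
next
  assume "\<forall>k\<in>{1..d}. cumhaz M Z Y k t = cumhaz M Z' Y' k t"
  then show "Hmat M Z Y d t = Hmat M Z' Y' d t"
    by (intro eq_matI) (auto simp: Hmat_def cumhaz_tot_def)
qed

(* The first rows are updated as in AJ_subdist_cell with survival factors 1 - sum F;
   the term |sum (F - G)| in the error controls the difference of these factors. *)
lemma first_row_error_step:
  fixes Fa Fb Ga Gb W w :: "nat \<Rightarrow> real" and sa Sa :: real and K :: "nat set"
  assumes "finite K"
    and Fb: "\<And>k. k \<in> K \<Longrightarrow> Fb k = Fa k + sa * W k" and Gb: "\<And>k. k \<in> K \<Longrightarrow> Gb k = Ga k + Sa * w k"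
    and sa: "sa = 1 - (\<Sum>k\<in>K. Fa k)" and Sa: "Sa = 1 - (\<Sum>k\<in>K. Ga k)"
    and W: "\<And>k. k \<in> K \<Longrightarrow> 0 \<le> W k" "(\<Sum>k\<in>K. W k) \<le> 1" and "0 \<le> Sa" "Sa \<le> 1"
  shows "(\<Sum>k\<in>K. \<bar>Fb k - Gb k\<bar>) + \<bar>\<Sum>k\<in>K. Fb k - Gb k\<bar>
    \<le> (\<Sum>k\<in>K. \<bar>Fa k - Ga k\<bar>) + \<bar>\<Sum>k\<in>K. Fa k - Ga k\<bar> + 2 * (\<Sum>k\<in>K. \<bar>W k - w k\<bar>)"
proof -
  define \<sigma> where "\<sigma> = (\<Sum>k\<in>K. Fa k - Ga k)"
  have diff: "Fb k - Gb k = (Fa k - Ga k) - \<sigma> * W k + Sa * (W k - w k)" if "k \<in> K" for k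
  proof -
    have "Fb k - Gb k = (Fa k - Ga k) + (sa - Sa) * W k + Sa * (W k - w k)"
      using Fb[OF that] Gb[OF that] by (simp add: algebra_simps)
    moreover have "sa - Sa = - \<sigma>" unfolding sa Sa \<sigma>_def by (simp add: sum_subtractf)
    ultimately show ?thesis by simp
  qed
  have pointwise: "\<bar>Fb k - Gb k\<bar> \<le> \<bar>Fa k - Ga k\<bar> + \<bar>\<sigma>\<bar> * W k + Sa * \<bar>W k - w k\<bar>" if "k \<in> K" for k
  proof -
    have "\<bar>Fb k - Gb k\<bar> \<le> \<bar>Fa k - Ga k\<bar> + \<bar>\<sigma> * W k\<bar> + \<bar>Sa * (W k - w k)\<bar>"
      unfolding diff[OF that] by arith
    then show ?thesis
      using W(1)[OF that] \<open>0 \<le> Sa\<close> by (simp add: abs_mult)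
  qed
  have componentwise: "(\<Sum>k\<in>K. \<bar>Fb k - Gb k\<bar>)
      \<le> (\<Sum>k\<in>K. \<bar>Fa k - Ga k\<bar>) + \<bar>\<sigma>\<bar> * (\<Sum>k\<in>K. W k) + Sa * (\<Sum>k\<in>K. \<bar>W k - w k\<bar>)"
  proof -
    have "(\<Sum>k\<in>K. \<bar>Fb k - Gb k\<bar>) \<le> (\<Sum>k\<in>K. \<bar>Fa k - Ga k\<bar> + \<bar>\<sigma>\<bar> * W k + Sa * \<bar>W k - w k\<bar>)"
      using pointwise by (rule sum_mono)
    also have "\<dots> = (\<Sum>k\<in>K. \<bar>Fa k - Ga k\<bar>) + \<bar>\<sigma>\<bar> * (\<Sum>k\<in>K. W k) + Sa * (\<Sum>k\<in>K. \<bar>W k - w k\<bar>)"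
      by (simp add: sum.distrib sum_distrib_left)
    finally show ?thesis .
  qed
  have total: "\<bar>\<Sum>k\<in>K. Fb k - Gb k\<bar> \<le> \<bar>\<sigma>\<bar> * (1 - (\<Sum>k\<in>K. W k)) + Sa * (\<Sum>k\<in>K. \<bar>W k - w k\<bar>)"
  proof -
    have "(\<Sum>k\<in>K. Fb k - Gb k) = (\<Sum>k\<in>K. (Fa k - Ga k) - \<sigma> * W k + Sa * (W k - w k))"
      by (rule sum.cong) (auto simp: diff)
    also have "\<dots> = \<sigma> * (1 - (\<Sum>k\<in>K. W k)) + Sa * (\<Sum>k\<in>K. W k - w k)"
      unfolding \<sigma>_def by (simp add: sum.distrib sum_subtractf sum_distrib_left algebra_simps)
    finally have "\<bar>\<Sum>k\<in>K. Fb k - Gb k\<bar> \<le> \<bar>\<sigma> * (1 - (\<Sum>k\<in>K. W k))\<bar> + \<bar>Sa * (\<Sum>k\<in>K. W k - w k)\<bar>"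
      by (simp only: abs_triangle_ineq)
    also have "\<dots> = \<bar>\<sigma>\<bar> * (1 - (\<Sum>k\<in>K. W k)) + Sa * \<bar>\<Sum>k\<in>K. W k - w k\<bar>"
      using W(2) \<open>0 \<le> Sa\<close> by (simp add: abs_mult)
    also have "Sa * \<bar>\<Sum>k\<in>K. W k - w k\<bar> \<le> Sa * (\<Sum>k\<in>K. \<bar>W k - w k\<bar>)"
      using \<open>0 \<le> Sa\<close> by (intro mult_left_mono sum_abs)
    finally show ?thesis by simp
  qed
  have "Sa * (\<Sum>k\<in>K. \<bar>W k - w k\<bar>) \<le> (\<Sum>k\<in>K. \<bar>W k - w k\<bar>)"
    using \<open>0 \<le> Sa\<close> \<open>Sa \<le> 1\<close> by (simp add: mult_left_le_one_le sum_nonneg)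
  with componentwise total show ?thesis
    unfolding \<sigma>_def[symmetric] by (simp add: algebra_simps)
qed

locale censored_competing_risks = prob_space M for M :: "'a measure" +
  fixes d :: nat and T Tt :: "'a \<Rightarrow> real" and D Dt :: "'a \<Rightarrow> nat" and X :: "nat \<Rightarrow> 'a \<Rightarrow> real \<times> nat"
  assumes d_pos: "d \<ge> 1"
    and T_measurable [measurable]: "T \<in> borel_measurable M" and T_pos: "\<forall>\<omega>\<in>space M. T \<omega> > 0"
    and D_measurable [measurable]: "D \<in> measurable M (count_space UNIV)"
    and D_range: "\<forall>\<omega>\<in>space M. D \<omega> \<in> {1..d}"
    and Tt_measurable [measurable]: "Tt \<in> borel_measurable M"
    and Tt_le_T: "\<forall>\<omega>\<in>space M. 0 < Tt \<omega> \<and> Tt \<omega> \<le> T \<omega>"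
    and Dt_def: "\<forall>\<omega>. Dt \<omega> = (if Tt \<omega> = T \<omega> then D \<omega> else 0)"
    and indep_X: "indep_vars (\<lambda>_. borel \<Otimes>\<^sub>M count_space UNIV) X UNIV"
    and distr_X: "\<forall>i. distr M (borel \<Otimes>\<^sub>M count_space UNIV) (X i)
                    = distr M (borel \<Otimes>\<^sub>M count_space UNIV) (\<lambda>\<omega>. (Tt \<omega>, Dt \<omega>))"
begin

abbreviation sample :: "'a \<Rightarrow> nat \<Rightarrow> real \<times> nat" where
  "sample \<omega> \<equiv> \<lambda>m. X m \<omega>"

lemma X_measurable [measurable]: "X i \<in> measurable M (borel \<Otimes>\<^sub>M count_space UNIV)"
  using indep_X unfolding indep_vars_def2 by auto

lemma Dt_measurable [measurable]: "Dt \<in> measurable M (count_space UNIV)"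
proof -
  have [measurable]: "{\<omega> \<in> space M. Tt \<omega> = T \<omega>} \<in> sets M"
    by (rule borel_measurable_eq) measurable
  have "Dt = (\<lambda>\<omega>. if Tt \<omega> = T \<omega> then D \<omega> else 0)"
    using Dt_def by auto
  then show ?thesis by simp
qed

lemma pred_snd_X [measurable]: "Measurable.pred M (\<lambda>\<omega>. snd (X i \<omega>) \<in> K)"
proof -
  have "(\<lambda>\<omega>. snd (X i \<omega>)) \<in> measurable M (count_space UNIV)" by measurable
  from measurable_sets[OF this, of K] show ?thesis
    unfolding pred_def by (simp add: vimage_def Int_def conj_commute)
qed

lemma consistent_sample_frequency:
  assumes "Measurable.pred (borel \<Otimes>\<^sub>M count_space UNIV) P"
  shows "consistent M (\<lambda>n \<omega>. real (card {i. i < n \<and> P (X i \<omega>)}) / real n) (prob {\<omega>\<in>space M. P (Tt \<omega>, Dt \<omega>)})"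
proof -
  have S: "{z. P z} \<in> sets (borel \<Otimes>\<^sub>M count_space UNIV)"
    using assms unfolding pred_def by (simp add: space_pair_measure)
  show ?thesis
    using consistent_empirical_frequency[OF indep_X _ _ S, of "\<lambda>\<omega>. (Tt \<omega>, Dt \<omega>)"] distr_X by simp
qed

lemma pred_snd_eq [measurable]: "Measurable.pred (borel \<Otimes>\<^sub>M count_space UNIV) (\<lambda>z :: real \<times> nat. snd z = k)"
proof -
  have "(\<lambda>z :: real \<times> nat. snd z) \<in> measurable (borel \<Otimes>\<^sub>M count_space UNIV) (count_space UNIV)" by measurable
  from measurable_sets[OF this, of "{k}"] show ?thesis
    unfolding pred_def by (simp add: vimage_def Int_def conj_commute)
qed

lemma consistent_events_between:
  "consistent M (\<lambda>n \<omega>. real (events_between (sample \<omega>) n k a b) / real n) (subdist_open M Tt Dt k a b)"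
  using consistent_sample_frequency[of "\<lambda>z. a < fst z \<and> fst z < b \<and> snd z = k"]
  unfolding events_between_def subdist_open_def by simp

lemma consistent_events_at:
  "consistent M (\<lambda>n \<omega>. real (events_at (sample \<omega>) n k b) / real n) (subdist_atom M Tt Dt k b)"
  using consistent_sample_frequency[of "\<lambda>z. fst z = b \<and> snd z = k"]
  unfolding events_at_def subdist_atom_def by simp

lemma consistent_at_risk_after:
  "consistent M (\<lambda>n \<omega>. real (at_risk_after (sample \<omega>) n a) / real n) (surv M Tt a)"
  using consistent_sample_frequency[of "\<lambda>z. a < fst z"]
  unfolding at_risk_after_def surv_def by simp

lemma consistent_at_risk:
  "consistent M (\<lambda>n \<omega>. real (at_risk (sample \<omega>) n b) / real n) (surv_left M Tt b)"
  using consistent_sample_frequency[of "\<lambda>z. b \<le> fst z"]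
  unfolding at_risk_def surv_left_def by simp

lemma count_measurable [measurable]:
  "(\<lambda>\<omega>. real (at_risk (sample \<omega>) n b)) \<in> borel_measurable M"
  "(\<lambda>\<omega>. real (at_risk_after (sample \<omega>) n a)) \<in> borel_measurable M"
  "(\<lambda>\<omega>. real (events_at (sample \<omega>) n k b)) \<in> borel_measurable M"
  "(\<lambda>\<omega>. real (events_between (sample \<omega>) n k a b)) \<in> borel_measurable M"
  unfolding at_risk_def at_risk_after_def events_at_def events_between_def real_card_eq_sum
  by measurable

lemma NA_incr_measurable [measurable]:
  "(\<lambda>\<omega>. NA_incr (sample \<omega>) n k (fst (X i \<omega>))) \<in> borel_measurable M"
  unfolding NA_incr_eq_sums by measurable

lemma NA_incr_const_measurable [measurable]: "(\<lambda>\<omega>. NA_incr (sample \<omega>) n k b) \<in> borel_measurable M"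
  unfolding NA_incr_def by measurable

lemma AJ_subdist_measurable [measurable]: "(\<lambda>\<omega>. AJ_subdist (sample \<omega>) n d k t) \<in> borel_measurable M"
proof -
  have [measurable]: "(\<lambda>\<omega>. prodlim (sample \<omega>) n d (event_times (sample \<omega>) n d \<inter> {..<fst (X i \<omega>)})) \<in> borel_measurable M" for i
    unfolding prodlim_def event_times_inter_lessThan prod_image_first_occurrences NA_tot_incr_def
    by measurable
  show ?thesis
    unfolding AJ_subdist_def event_times_inter_atMost sum_image_first_occurrences by measurable
qed

lemma AJ_surv_measurable [measurable]: "(\<lambda>\<omega>. AJ_surv (sample \<omega>) n d t) \<in> borel_measurable M"
  unfolding AJ_surv_eq by measurable

definition open_haz_bound :: "real \<Rightarrow> real \<Rightarrow> real" where
  "open_haz_bound a b = (\<Sum>k\<in>{1..d}. subdist_open M Tt Dt k a b / surv_left M Tt b)"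

lemma consistent_max_one_at_risk:
  "consistent M (\<lambda>n \<omega>. max 1 (real (at_risk (sample \<omega>) n b)) / real n) (surv_left M Tt b)"
proof -
  have "consistent M (\<lambda>n \<omega>. max (1 / real n) (real (at_risk (sample \<omega>) n b) / real n)) (max 0 (surv_left M Tt b))"
    by (intro consistent_max consistent_tendsto lim_const_over_n consistent_at_risk) measurable
  moreover have "max (1 / real n) (c / real n) = max 1 c / real n" for n and c :: real
    by (cases "n = 0") (auto simp: max_divide_distrib_right)
  ultimately show ?thesis
    by (simp add: surv_left_def)
qed

lemma consistent_NA_open_upper:
  "surv_left M Tt b > 0 \<Longrightarrow> consistent M (\<lambda>n \<omega>. real (events_between (sample \<omega>) n k a b) / max 1 (real (at_risk (sample \<omega>) n b)))
     (subdist_open M Tt Dt k a b / surv_left M Tt b)"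
  by (intro consistent_ratio_of_averages consistent_events_between consistent_max_one_at_risk)
    (simp_all add: events_between_def)

lemma consistent_NA_incr:
  "surv_left M Tt b > 0 \<Longrightarrow> consistent M (\<lambda>n \<omega>. NA_incr (sample \<omega>) n k b) (subdist_atom M Tt Dt k b / surv_left M Tt b)"
  unfolding NA_incr_def
  by (intro consistent_ratio_of_averages consistent_events_at consistent_at_risk) (simp_all add: events_at_def)

lemma consistent_NA_cell_upper:
  "surv_left M Tt b > 0 \<Longrightarrow> consistent M (\<lambda>n \<omega>. NA_cell_upper (sample \<omega>) n k a b) (haz_upper M Tt Dt k a b)"
  unfolding NA_cell_upper_def haz_upper_def
  by (intro consistent_add consistent_NA_open_upper consistent_NA_incr) (auto simp: NA_incr_def)

lemma consistent_NA_cell_lower: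
  "surv_left M Tt b > 0 \<Longrightarrow> surv M Tt a > 0 \<Longrightarrow>
    consistent M (\<lambda>n \<omega>. NA_cell_lower (sample \<omega>) n k a b) (haz_lower M Tt Dt k a b)"
  unfolding NA_cell_lower_def haz_lower_def
  by (intro consistent_add consistent_NA_incr consistent_ratio_of_averages consistent_events_between
      consistent_at_risk_after) (auto simp: NA_incr_def events_between_def)

lemma consistent_NA_tot_open_upper:
  "surv_left M Tt b > 0 \<Longrightarrow> consistent M (\<lambda>n \<omega>. NA_tot_open_upper (sample \<omega>) n d a b) (open_haz_bound a b)"
  unfolding NA_tot_open_upper_def open_haz_bound_def
  by (intro consistent_sum consistent_NA_open_upper) auto

(* The value that consistency forces on the limit of AJ_cell_incr. *)
definition cond_subdist_incr :: "nat \<Rightarrow> real \<Rightarrow> real \<Rightarrow> real" where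
  "cond_subdist_incr k a b = (subdist M T D k b - subdist M T D k a) / surv M T a"

(* Error budget of a cell: the spread of the bounds on the observed hazard increment
   (observed_cell_spread) plus the deviation of the true one from cond_subdist_incr
   (cumhaz_cell_approx). *)
definition cell_err :: "real \<Rightarrow> nat \<Rightarrow> real \<Rightarrow> real \<Rightarrow> real" where
  "cell_err c k a b = ((1 + real d) * (subdist M Tt Dt k b - subdist M Tt Dt k a) * open_mass M Tt a b
     + (subdist M T D k b - subdist M T D k a) * open_mass M T a b) / c\<^sup>2"

lemma surv_T_eq: "surv M T a = 1 - (\<Sum>k\<in>{1..d}. subdist M T D k a)"
proof -
  have "(\<Sum>k\<in>{1..d}. subdist M T D k a) = measure M (\<Union>k\<in>{1..d}. {\<omega>\<in>space M. T \<omega> \<le> a \<and> D \<omega> = k})"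
    unfolding subdist_def by (rule finite_measure_finite_Union[symmetric]) (auto simp: disjoint_family_on_def)
  also have "(\<Union>k\<in>{1..d}. {\<omega>\<in>space M. T \<omega> \<le> a \<and> D \<omega> = k}) = space M - {\<omega>\<in>space M. a < T \<omega>}"
    using D_range by auto
  finally show ?thesis
    unfolding surv_def by (simp add: prob_compl)
qed

lemma subdist_T_at_0: "subdist M T D k 0 = 0"
proof -
  have "{\<omega>\<in>space M. T \<omega> \<le> 0 \<and> D \<omega> = k} = {}"
    using T_pos by force
  then show ?thesis unfolding subdist_def by (metis measure_empty)
qed

lemma surv_left_Tt_le_T: "surv_left M Tt b \<le> surv_left M T b"
  unfolding surv_left_def using Tt_le_T by (intro finite_measure_mono) force+

lemma cell_surv_bounds:
  assumes "a < b" "b \<le> t"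
  shows "surv M Tt t \<le> surv_left M Tt b" and "surv M Tt t \<le> surv_left M T b"
    and "surv M Tt t \<le> surv M Tt a" and "surv M Tt t \<le> surv M T a"
proof -
  show t_b: "surv M Tt t \<le> surv_left M Tt b"
    unfolding surv_def surv_left_def using assms by (intro finite_measure_mono) auto
  then show "surv M Tt t \<le> surv_left M T b"
    using surv_left_Tt_le_T by (rule order_trans)
  show "surv M Tt t \<le> surv M Tt a"
    using t_b surv_left_le_surv[OF Tt_measurable assms(1)] by (rule order_trans)
  show "surv M Tt t \<le> surv M T a"
    using t_b surv_left_Tt_le_T surv_left_le_surv[OF T_measurable assms(1)] by (meson order_trans)
qed

lemma open_haz_bound_nonneg: "0 \<le> open_haz_bound a b"
  unfolding open_haz_bound_def subdist_open_def surv_left_def by (intro sum_nonneg) simp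

lemma observed_cell_spread:
  assumes "a < b" "b \<le> t" "surv M Tt t > 0"
  shows "haz_upper M Tt Dt k a b - haz_lower M Tt Dt k a b + open_haz_bound a b * haz_upper M Tt Dt k a b
    \<le> (1 + real d) * (subdist M Tt Dt k b - subdist M Tt Dt k a) * open_mass M Tt a b / (surv M Tt t)\<^sup>2"
proof -
  let ?c = "surv M Tt t" and ?dF = "subdist M Tt Dt k b - subdist M Tt Dt k a"
  note c = cell_surv_bounds[OF assms(1,2)]
  have "open_haz_bound a b \<le> (\<Sum>k\<in>{1..d}. open_mass M Tt a b / ?c)"
    unfolding open_haz_bound_def using c(1) assms(3)
    by (intro sum_mono frac_le) (auto simp: subdist_open_def open_mass_def intro!: finite_measure_mono)
  then have xp: "open_haz_bound a b \<le> real d * open_mass M Tt a b / ?c" by simp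
  have hi: "0 \<le> haz_upper M Tt Dt k a b" "haz_upper M Tt Dt k a b \<le> ?dF / ?c"
    using haz_upper_le[OF Tt_measurable Dt_measurable assms(1,3) c(1)]
    by (auto simp: haz_upper_def subdist_open_def subdist_atom_def surv_left_def)
  have "open_haz_bound a b * haz_upper M Tt Dt k a b \<le> (real d * open_mass M Tt a b / ?c) * (?dF / ?c)"
    using xp hi open_haz_bound_nonneg assms(3) by (intro mult_mono) (auto simp: open_mass_def)
  also have "\<dots> = real d * ?dF * open_mass M Tt a b / ?c\<^sup>2"
    by (simp add: power2_eq_square)
  moreover have "(1 + real d) * ?dF * open_mass M Tt a b / ?c\<^sup>2 =
      ?dF * open_mass M Tt a b / ?c\<^sup>2 + real d * ?dF * open_mass M Tt a b / ?c\<^sup>2"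
    by (simp add: distrib_right add_divide_distrib)
  ultimately show ?thesis
    using haz_upper_minus_lower_le[OF Tt_measurable Dt_measurable assms(1,3) c(1), of k] by linarith
qed

lemma cumhaz_cell_diff_le:
  assumes "0 \<le> a" "a < b" "b \<le> t" "surv M Tt t > 0"
    and "(1 - open_haz_bound a b) * haz_lower M Tt Dt k a b \<le> cond_subdist_incr k a b"
    and "cond_subdist_incr k a b \<le> haz_upper M Tt Dt k a b"
  shows "\<bar>(cumhaz M T D k b - cumhaz M T D k a) - (cumhaz M Tt Dt k b - cumhaz M Tt Dt k a)\<bar>
    \<le> cell_err (surv M Tt t) k a b"
proof -
  let ?lo = "haz_lower M Tt Dt k a b" and ?hi = "haz_upper M Tt Dt k a b" and ?xp = "open_haz_bound a b"
  note c = cell_surv_bounds[OF assms(2,3)]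
  have obs: "?lo \<le> cumhaz M Tt Dt k b - cumhaz M Tt Dt k a" "cumhaz M Tt Dt k b - cumhaz M Tt Dt k a \<le> ?hi"
    using cumhaz_cell_bounds[OF Tt_measurable Dt_measurable assms(1,2)] c(1) assms(4) by auto
  have "0 \<le> ?hi"
    using obs haz_lower_nonneg[of Tt Dt k a b] by linarith
  then have "?xp * ?lo \<le> ?xp * ?hi" "0 \<le> ?xp * ?hi"
    using obs open_haz_bound_nonneg[of a b] by (auto intro: mult_left_mono)
  moreover have "(1 - ?xp) * ?lo = ?lo - ?xp * ?lo"
    by (simp add: algebra_simps)
  ultimately have "\<bar>cond_subdist_incr k a b - (cumhaz M Tt Dt k b - cumhaz M Tt Dt k a)\<bar> \<le> ?hi - ?lo + ?xp * ?hi"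
    using assms(5,6) obs unfolding abs_le_iff by linarith
  moreover have "\<bar>cumhaz M T D k b - cumhaz M T D k a - cond_subdist_incr k a b\<bar>
      \<le> (subdist M T D k b - subdist M T D k a) * open_mass M T a b / (surv M Tt t)\<^sup>2"
    using cumhaz_cell_approx[OF T_measurable D_measurable assms(1,2,4) c(2)] unfolding cond_subdist_incr_def .
  ultimately show ?thesis
    using observed_cell_spread[OF assms(2-4), of k] unfolding cell_err_def add_divide_distrib by linarith
qed

lemma cell_dev_term_le:
  assumes "0 \<le> a" "a < b" "b \<le> t" "surv M Tt t > 0"
    and "cumhaz M Tt Dt k b - cumhaz M Tt Dt k a = cumhaz M T D k b - cumhaz M T D k a"
  shows "\<bar>haz_upper M Tt Dt k a b - cond_subdist_incr k a b\<bar>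
      + \<bar>cond_subdist_incr k a b - (1 - open_haz_bound a b) * haz_lower M Tt Dt k a b\<bar>
    \<le> 2 * cell_err (surv M Tt t) k a b"
proof -
  let ?lo = "haz_lower M Tt Dt k a b" and ?hi = "haz_upper M Tt Dt k a b" and ?xp = "open_haz_bound a b"
  note c = cell_surv_bounds[OF assms(2,3)]
  have "?lo \<le> cumhaz M Tt Dt k b - cumhaz M Tt Dt k a" "cumhaz M Tt Dt k b - cumhaz M Tt Dt k a \<le> ?hi"
    using cumhaz_cell_bounds[OF Tt_measurable Dt_measurable assms(1,2)] c(1) assms(4) by auto
  then have obs: "?lo \<le> cumhaz M T D k b - cumhaz M T D k a" "cumhaz M T D k b - cumhaz M T D k a \<le> ?hi"
    using assms(5) by linarith+
  have "0 \<le> ?lo" "?lo \<le> ?hi"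
    using obs haz_lower_nonneg[of Tt Dt k a b] by linarith+
  then have xp: "0 \<le> ?xp * ?lo" "?xp * ?lo \<le> ?xp * ?hi"
    using open_haz_bound_nonneg[of a b] by (auto intro: mult_left_mono)
  have xp_lo: "(1 - ?xp) * ?lo = ?lo - ?xp * ?lo"
    by (simp add: algebra_simps)
  let ?B = "(subdist M T D k b - subdist M T D k a) * open_mass M T a b / (surv M Tt t)\<^sup>2"
  have "\<bar>cumhaz M T D k b - cumhaz M T D k a - cond_subdist_incr k a b\<bar> \<le> ?B"
    using cumhaz_cell_approx[OF T_measurable D_measurable assms(1,2,4) c(2)] unfolding cond_subdist_incr_def .
  then have "\<bar>?hi - cond_subdist_incr k a b\<bar> \<le> ?hi - ?lo + ?B"
    and "\<bar>cond_subdist_incr k a b - (1 - ?xp) * ?lo\<bar> \<le> ?B + (?hi - ?lo) + ?xp * ?hi"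
    using obs xp xp_lo unfolding abs_le_iff by linarith+
  then have "\<bar>?hi - cond_subdist_incr k a b\<bar> + \<bar>cond_subdist_incr k a b - (1 - ?xp) * ?lo\<bar>
      \<le> 2 * (?hi - ?lo + ?xp * ?hi) + 2 * ?B"
    using xp by (smt (verit))
  also have "\<dots> \<le> 2 * ((1 + real d) * (subdist M Tt Dt k b - subdist M Tt Dt k a) * open_mass M Tt a b
      / (surv M Tt t)\<^sup>2) + 2 * ?B"
    using observed_cell_spread[OF assms(2-4), of k] by (intro add_right_mono mult_left_mono) simp_all
  also have "\<dots> = 2 * cell_err (surv M Tt t) k a b"
    unfolding cell_err_def by (simp add: add_divide_distrib)
  finally show ?thesis .
qed

definition mass_grid :: "real \<Rightarrow> real \<Rightarrow> nat \<Rightarrow> (nat \<Rightarrow> real) \<Rightarrow> bool" where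
  "mass_grid \<epsilon> t K g \<longleftrightarrow> g 0 = 0 \<and> g K = t \<and> (\<forall>i<K. g i < g (Suc i)) \<and>
     (\<forall>i<K. open_mass M Tt (g i) (g (Suc i)) \<le> \<epsilon> \<and> open_mass M T (g i) (g (Suc i)) \<le> \<epsilon>)"

lemma mass_grid_exists:
  assumes "\<epsilon> > 0" "0 \<le> t"
  shows "\<exists>K g. mass_grid \<epsilon> t K g"
proof -
  interpret Tt: finite_borel_measure "distr M borel Tt"
    by (rule finite_borel_measure_distr) simp
  interpret T: finite_borel_measure "distr M borel T"
    by (rule finite_borel_measure_distr) simp
  let ?\<Phi> = "\<lambda>x. cdf (distr M borel Tt) x + cdf (distr M borel T) x"
  have "mono ?\<Phi>"
    by (intro monoI add_mono Tt.cdf_nondecreasing T.cdf_nondecreasing)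
  moreover have "continuous (at_right x) ?\<Phi>" for x
    by (intro continuous_add Tt.cdf_is_right_cont T.cdf_is_right_cont)
  ultimately obtain K g where g: "fine_partition ?\<Phi> \<epsilon> 0 t K g"
    using fine_partition_exists[OF _ _ assms] by blast
  have "open_mass M Tt (g i) (g (Suc i)) \<le> \<epsilon> \<and> open_mass M T (g i) (g (Suc i)) \<le> \<epsilon>" if "i < K" for i
  proof -
    have "cdf (distr M borel Tt) x - cdf (distr M borel Tt) (g i) \<le> \<epsilon>"
      "cdf (distr M borel T) x - cdf (distr M borel T) (g i) \<le> \<epsilon>" if "g i < x" "x < g (Suc i)" for x
      using g \<open>i < K\<close> that Tt.cdf_nondecreasing[of "g i" x] T.cdf_nondecreasing[of "g i" x]
      unfolding fine_partition_def by force+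
    then show ?thesis
      using g \<open>i < K\<close> unfolding fine_partition_def by (auto intro!: open_mass_le simp: cdf_distr)
  qed
  with g show ?thesis
    unfolding fine_partition_def mass_grid_def by blast
qed

lemma mass_grid_cell:
  assumes "mass_grid \<epsilon> t K g" "i < K"
  shows "0 \<le> g i" "g i < g (Suc i)" "g (Suc i) \<le> t"
  using assms chain_le[of K g 0 i] chain_le[of K g "Suc i" K] unfolding mass_grid_def by auto

lemma cell_err_le:
  assumes "a \<le> b" "open_mass M Tt a b \<le> \<epsilon>" "open_mass M T a b \<le> \<epsilon>" "c > 0"
  shows "cell_err c k a b \<le> \<epsilon> / c\<^sup>2 *
    ((1 + real d) * (subdist M Tt Dt k b - subdist M Tt Dt k a) + (subdist M T D k b - subdist M T D k a))"
proof -
  let ?dFt = "subdist M Tt Dt k b - subdist M Tt Dt k a" and ?dF = "subdist M T D k b - subdist M T D k a"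
  have "0 \<le> ?dFt" "0 \<le> ?dF"
    using assms(1) by (auto intro!: subdist_mono)
  then have "(1 + real d) * ?dFt * open_mass M Tt a b \<le> (1 + real d) * ?dFt * \<epsilon>"
    and "?dF * open_mass M T a b \<le> ?dF * \<epsilon>"
    using assms(2,3) by (auto intro!: mult_left_mono)
  then have "cell_err c k a b \<le> ((1 + real d) * ?dFt * \<epsilon> + ?dF * \<epsilon>) / c\<^sup>2"
    unfolding cell_err_def using assms(4) by (intro divide_right_mono add_mono) auto
  then show ?thesis
    by (simp add: field_simps)
qed

lemma sum_cell_err_le:
  assumes "mass_grid \<epsilon> t K g" "c > 0" "\<epsilon> > 0"
  shows "(\<Sum>i<K. cell_err c k (g i) (g (Suc i))) \<le> \<epsilon> * (2 + real d) / c\<^sup>2"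
proof -
  define Ft where "Ft x = subdist M Tt Dt k x" for x
  define F where "F x = subdist M T D k x" for x
  have "(\<Sum>i<K. cell_err c k (g i) (g (Suc i)))
      \<le> (\<Sum>i<K. \<epsilon> / c\<^sup>2 * ((1 + real d) * (Ft (g (Suc i)) - Ft (g i)) + (F (g (Suc i)) - F (g i))))"
    using assms(1,2) mass_grid_cell[OF assms(1)] unfolding Ft_def F_def mass_grid_def
    by (intro sum_mono cell_err_le) (auto intro: less_imp_le)
  also have "\<dots> = \<epsilon> / c\<^sup>2 * (\<Sum>i<K. (1 + real d) * (Ft (g (Suc i)) - Ft (g i)) + (F (g (Suc i)) - F (g i)))"
    by (rule sum_distrib_left[symmetric])
  also have "\<dots> = \<epsilon> / c\<^sup>2 * ((1 + real d) * (\<Sum>i<K. Ft (g (Suc i)) - Ft (g i)) + (\<Sum>i<K. F (g (Suc i)) - F (g i)))"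
    by (simp only: sum.distrib sum_distrib_left)
  also have "\<dots> = \<epsilon> / c\<^sup>2 * ((1 + real d) * (Ft t - Ft 0) + (F t - F 0))"
    using assms(1) unfolding sum_lessThan_telescope[of "\<lambda>i. Ft (g i)"] sum_lessThan_telescope[of "\<lambda>i. F (g i)"]
      mass_grid_def by simp
  also have "\<dots> \<le> \<epsilon> / c\<^sup>2 * ((1 + real d) * 1 + 1)"
  proof -
    have "Ft t - Ft 0 \<le> 1" "F t - F 0 \<le> 1"
      unfolding Ft_def F_def subdist_def by (smt (verit) measure_nonneg prob_le_1)+
    then show ?thesis
      using assms(2,3) by (intro mult_left_mono add_mono) auto
  qed
  finally show ?thesis by simp
qed

lemma cond_subdist_incr_bounds:
  assumes cons_a: "\<And>k. k \<in> {1..d} \<Longrightarrow> consistent M (\<lambda>n \<omega>. AJ_subdist (sample \<omega>) n d k a) (subdist M T D k a)"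
    and cons_b: "consistent M (\<lambda>n \<omega>. AJ_subdist (sample \<omega>) n d k b) (subdist M T D k b)"
    and "0 \<le> a" "a < b" "b \<le> t" "surv M Tt t > 0" "k \<in> {1..d}"
  shows "(1 - open_haz_bound a b) * haz_lower M Tt Dt k a b \<le> cond_subdist_incr k a b"
    and "cond_subdist_incr k a b \<le> haz_upper M Tt Dt k a b"
proof -
  note c = cell_surv_bounds[OF assms(4,5)]
  have pos: "surv_left M Tt b > 0" "surv M Tt a > 0" "surv M T a > 0"
    using c assms(6) by linarith+
  have S: "consistent M (\<lambda>n \<omega>. AJ_surv (sample \<omega>) n d a) (surv M T a)"
    unfolding AJ_surv_eq surv_T_eq
    by (intro consistent_diff consistent_const consistent_sum cons_a) auto
  have dF: "consistent M (\<lambda>n \<omega>. AJ_subdist (sample \<omega>) n d k b - AJ_subdist (sample \<omega>) n d k a)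
      (subdist M T D k b - subdist M T D k a)"
    by (intro consistent_diff cons_a cons_b assms) auto
  have lower: "consistent M (\<lambda>n \<omega>. AJ_surv (sample \<omega>) n d a *
        ((1 - NA_tot_open_upper (sample \<omega>) n d a b) * NA_cell_lower (sample \<omega>) n k a b))
      (surv M T a * ((1 - open_haz_bound a b) * haz_lower M Tt Dt k a b))"
    by (intro consistent_mult S consistent_diff consistent_const consistent_NA_tot_open_upper
        consistent_NA_cell_lower pos) (auto simp: NA_tot_open_upper_def NA_cell_lower_def)
  have upper: "consistent M (\<lambda>n \<omega>. AJ_surv (sample \<omega>) n d a * NA_cell_upper (sample \<omega>) n k a b)
      (surv M T a * haz_upper M Tt Dt k a b)"
    by (intro consistent_mult S consistent_NA_cell_upper pos) (auto simp: NA_cell_upper_def)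
  have "AJ_subdist xs n d k b - AJ_subdist xs n d k a = AJ_surv xs n d a * AJ_cell_incr xs n d k a b" for xs n
    using AJ_subdist_cell[OF assms(3,4,7)] by simp
  then have "AJ_surv xs n d a * ((1 - NA_tot_open_upper xs n d a b) * NA_cell_lower xs n k a b)
        \<le> AJ_subdist xs n d k b - AJ_subdist xs n d k a"
      "AJ_subdist xs n d k b - AJ_subdist xs n d k a \<le> AJ_surv xs n d a * NA_cell_upper xs n k a b" for xs n
    using NA_cell_lower_le_AJ_cell_incr[OF assms(3,7)] AJ_cell_incr_le_NA_cell_upper[OF assms(3,7)]
    by (auto intro!: mult_left_mono AJ_surv_nonneg)
  then have "surv M T a * ((1 - open_haz_bound a b) * haz_lower M Tt Dt k a b) \<le> subdist M T D k b - subdist M T D k a"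
    and "subdist M T D k b - subdist M T D k a \<le> surv M T a * haz_upper M Tt Dt k a b"
    by (intro consistent_limit_mono[OF lower dF] consistent_limit_mono[OF dF upper];
        auto simp: NA_tot_open_upper_def NA_cell_lower_def NA_cell_upper_def)+
  then show "(1 - open_haz_bound a b) * haz_lower M Tt Dt k a b \<le> cond_subdist_incr k a b"
    and "cond_subdist_incr k a b \<le> haz_upper M Tt Dt k a b"
    unfolding cond_subdist_incr_def using pos(3) by (simp_all add: field_simps)
qed

lemma surv_Tt_antimono: "x \<le> y \<Longrightarrow> surv M Tt y \<le> surv M Tt x"
  unfolding surv_def by (intro finite_measure_mono) auto

lemma cumhaz_cell_diff_le_of_consistent:
  assumes cons: "\<And>t k. 0 \<le> t \<Longrightarrow> surv M Tt t > 0 \<Longrightarrow> k \<in> {1..d} \<Longrightarrow>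
      consistent M (\<lambda>n \<omega>. AJ_subdist (sample \<omega>) n d k t) (subdist M T D k t)"
    and "0 \<le> a" "a < b" "b \<le> t" "surv M Tt t > 0" "k \<in> {1..d}"
  shows "\<bar>(cumhaz M T D k b - cumhaz M T D k a) - (cumhaz M Tt Dt k b - cumhaz M Tt Dt k a)\<bar>
    \<le> cell_err (surv M Tt t) k a b"
proof -
  have "surv M Tt a > 0" "surv M Tt b > 0"
    using surv_Tt_antimono[of a t] surv_Tt_antimono[of b t] assms(3-5) by auto
  with assms(2,3,6) cons have "\<And>k. k \<in> {1..d} \<Longrightarrow> consistent M (\<lambda>n \<omega>. AJ_subdist (sample \<omega>) n d k a) (subdist M T D k a)"
    and "consistent M (\<lambda>n \<omega>. AJ_subdist (sample \<omega>) n d k b) (subdist M T D k b)"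
    by auto
  from cumhaz_cell_diff_le[OF assms(2-5) cond_subdist_incr_bounds[OF this assms(2-6)]]
  show ?thesis .
qed

lemma cumhaz_eq_of_consistent:
  assumes cons: "\<And>t k. 0 \<le> t \<Longrightarrow> surv M Tt t > 0 \<Longrightarrow> k \<in> {1..d} \<Longrightarrow>
      consistent M (\<lambda>n \<omega>. AJ_subdist (sample \<omega>) n d k t) (subdist M T D k t)"
    and t: "0 \<le> t" "surv M Tt t > 0" and k: "k \<in> {1..d}"
  shows "cumhaz M Tt Dt k t = cumhaz M T D k t"
proof -
  let ?c = "surv M Tt t"
  define \<delta> where "\<delta> = \<bar>cumhaz M T D k t - cumhaz M Tt Dt k t\<bar>"
  have "\<delta> \<le> 0 + e" if "e > 0" for e
  proof -
    define \<epsilon> where "\<epsilon> = e * ?c\<^sup>2 / (2 + real d)"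
    have "\<epsilon> > 0" using that t(2) by (simp add: \<epsilon>_def)
    then obtain K g where g: "mass_grid \<epsilon> t K g"
      using mass_grid_exists t(1) by blast
    let ?h = "\<lambda>i. cumhaz M T D k (g i) - cumhaz M Tt Dt k (g i)"
    have "\<delta> = \<bar>\<Sum>i<K. ?h (Suc i) - ?h i\<bar>"
      using g unfolding \<delta>_def sum_lessThan_telescope[of ?h] mass_grid_def by (simp add: cumhaz_at_0)
    also have "\<dots> \<le> (\<Sum>i<K. \<bar>?h (Suc i) - ?h i\<bar>)"
      by (rule sum_abs)
    also have "\<dots> \<le> (\<Sum>i<K. cell_err ?c k (g i) (g (Suc i)))"
    proof (rule sum_mono)
      fix i assume "i \<in> {..<K}"
      from cumhaz_cell_diff_le_of_consistent[OF cons mass_grid_cell[OF g] t(2) k] this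
      show "\<bar>?h (Suc i) - ?h i\<bar> \<le> cell_err ?c k (g i) (g (Suc i))"
        by (simp add: algebra_simps)
    qed
    also have "\<dots> \<le> \<epsilon> * (2 + real d) / ?c\<^sup>2"
      by (rule sum_cell_err_le[OF g t(2) \<open>\<epsilon> > 0\<close>])
    also have "\<dots> = e"
      using t(2) by (simp add: \<epsilon>_def)
    finally show ?thesis by simp
  qed
  then have "\<delta> \<le> 0" by (rule field_le_epsilon)
  then show ?thesis unfolding \<delta>_def by simp
qed

definition AJ_error :: "'a \<Rightarrow> nat \<Rightarrow> real \<Rightarrow> real" where
  "AJ_error \<omega> n x = (\<Sum>k\<in>{1..d}. \<bar>AJ_subdist (sample \<omega>) n d k x - subdist M T D k x\<bar>)
     + \<bar>\<Sum>k\<in>{1..d}. AJ_subdist (sample \<omega>) n d k x - subdist M T D k x\<bar>"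

definition AJ_cell_dev :: "nat \<Rightarrow> 'a \<Rightarrow> real \<Rightarrow> real \<Rightarrow> real" where
  "AJ_cell_dev n \<omega> a b = 2 * (\<Sum>k\<in>{1..d}. \<bar>NA_cell_upper (sample \<omega>) n k a b - cond_subdist_incr k a b\<bar>
     + \<bar>cond_subdist_incr k a b - (1 - NA_tot_open_upper (sample \<omega>) n d a b) * NA_cell_lower (sample \<omega>) n k a b\<bar>)"

definition cell_dev :: "real \<Rightarrow> real \<Rightarrow> real" where
  "cell_dev a b = 2 * (\<Sum>k\<in>{1..d}. \<bar>haz_upper M Tt Dt k a b - cond_subdist_incr k a b\<bar>
     + \<bar>cond_subdist_incr k a b - (1 - open_haz_bound a b) * haz_lower M Tt Dt k a b\<bar>)"

lemma AJ_cell_dev_measurable [measurable]: "(\<lambda>\<omega>. AJ_cell_dev n \<omega> a b) \<in> borel_measurable M"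
  unfolding AJ_cell_dev_def NA_cell_upper_def NA_cell_lower_def NA_tot_open_upper_def by measurable

lemma AJ_error_step:
  assumes "0 \<le> a" "a < b" "b \<le> t" "surv M Tt t > 0"
  shows "AJ_error \<omega> n b \<le> AJ_error \<omega> n a + AJ_cell_dev n \<omega> a b"
proof -
  let ?W = "\<lambda>k. AJ_cell_incr (sample \<omega>) n d k a b" and ?w = "\<lambda>k. cond_subdist_incr k a b"
  have "surv M T a > 0" "surv M T a \<le> 1"
    using cell_surv_bounds(4)[OF assms(2,3)] assms(4) by (auto simp: surv_def)
  then have "AJ_error \<omega> n b \<le> AJ_error \<omega> n a + 2 * (\<Sum>k\<in>{1..d}. \<bar>?W k - ?w k\<bar>)"
    unfolding AJ_error_def using sum_AJ_cell_incr_le_1[of "sample \<omega>" n d a b]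
    by (intro first_row_error_step[where sa = "AJ_surv (sample \<omega>) n d a" and Sa = "surv M T a"])
      (auto simp: AJ_subdist_cell[OF assms(1,2)] cond_subdist_incr_def AJ_surv_eq surv_T_eq
        AJ_cell_incr_nonneg)
  also have "\<bar>?W k - ?w k\<bar> \<le> \<bar>NA_cell_upper (sample \<omega>) n k a b - ?w k\<bar>
      + \<bar>?w k - (1 - NA_tot_open_upper (sample \<omega>) n d a b) * NA_cell_lower (sample \<omega>) n k a b\<bar>" if "k \<in> {1..d}" for k
    using AJ_cell_incr_le_NA_cell_upper[OF assms(1) that, where xs = "sample \<omega>" and n = n and b = b]
      NA_cell_lower_le_AJ_cell_incr[OF assms(1) that, where xs = "sample \<omega>" and n = n and b = b]
    by arith
  then have "2 * (\<Sum>k\<in>{1..d}. \<bar>?W k - ?w k\<bar>) \<le> AJ_cell_dev n \<omega> a b"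
    unfolding AJ_cell_dev_def by (intro mult_left_mono sum_mono) auto
  finally show ?thesis by simp
qed

lemma consistent_AJ_cell_dev:
  assumes "0 \<le> a" "a < b" "b \<le> t" "surv M Tt t > 0"
  shows "consistent M (\<lambda>n \<omega>. AJ_cell_dev n \<omega> a b) (cell_dev a b)"
proof -
  note c = cell_surv_bounds[OF assms(2,3)]
  have pos: "surv_left M Tt b > 0" "surv M Tt a > 0"
    using c assms(4) by linarith+
  show ?thesis
    unfolding AJ_cell_dev_def cell_dev_def
    by (intro consistent_mult consistent_const consistent_sum consistent_add consistent_abs consistent_diff
        consistent_NA_cell_upper consistent_NA_tot_open_upper consistent_NA_cell_lower pos)
      (auto simp: NA_cell_upper_def NA_cell_lower_def NA_tot_open_upper_def)
qed

lemma cell_dev_le_sum_cell_err: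
  assumes eq: "\<And>x k. 0 \<le> x \<Longrightarrow> x \<le> t \<Longrightarrow> k \<in> {1..d} \<Longrightarrow> cumhaz M Tt Dt k x = cumhaz M T D k x"
    and "0 \<le> a" "a < b" "b \<le> t" "surv M Tt t > 0"
  shows "cell_dev a b \<le> 4 * (\<Sum>k\<in>{1..d}. cell_err (surv M Tt t) k a b)"
proof -
  have "cell_dev a b \<le> 2 * (\<Sum>k\<in>{1..d}. 2 * cell_err (surv M Tt t) k a b)"
    unfolding cell_dev_def using assms by (intro mult_left_mono sum_mono cell_dev_term_le) auto
  then show ?thesis by (simp add: sum_distrib_left)
qed

lemma AJ_error_le_sum_AJ_cell_dev:
  assumes "mass_grid \<epsilon> t K g" "surv M Tt t > 0" "i \<le> K"
  shows "AJ_error \<omega> n (g i) \<le> (\<Sum>j<i. AJ_cell_dev n \<omega> (g j) (g (Suc j)))"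
  using assms(3)
proof (induction i)
  case 0
  show ?case
    using assms(1) unfolding AJ_error_def mass_grid_def by (simp add: AJ_subdist_at_0 subdist_T_at_0)
next
  case (Suc i)
  then show ?case
    using AJ_error_step[OF mass_grid_cell[OF assms(1)] assms(2), of i \<omega> n] by simp
qed

lemma sum_cell_dev_le:
  assumes eq: "\<And>x k. 0 \<le> x \<Longrightarrow> x \<le> t \<Longrightarrow> k \<in> {1..d} \<Longrightarrow> cumhaz M Tt Dt k x = cumhaz M T D k x"
    and "mass_grid \<epsilon> t K g" "surv M Tt t > 0" "\<epsilon> > 0"
  shows "(\<Sum>i<K. cell_dev (g i) (g (Suc i))) \<le> 4 * real d * (\<epsilon> * (2 + real d) / (surv M Tt t)\<^sup>2)"
proof -
  have "(\<Sum>i<K. cell_dev (g i) (g (Suc i))) \<le> (\<Sum>i<K. 4 * (\<Sum>k\<in>{1..d}. cell_err (surv M Tt t) k (g i) (g (Suc i))))"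
    using mass_grid_cell[OF assms(2)] assms(3) by (intro sum_mono cell_dev_le_sum_cell_err[OF eq]) auto
  also have "\<dots> = 4 * (\<Sum>k\<in>{1..d}. \<Sum>i<K. cell_err (surv M Tt t) k (g i) (g (Suc i)))"
    by (simp add: sum_distrib_left sum.swap[of _ "{..<K}"])
  also have "\<dots> \<le> 4 * (\<Sum>k\<in>{1..d}. \<epsilon> * (2 + real d) / (surv M Tt t)\<^sup>2)"
    using sum_cell_err_le[OF assms(2-4)] by (intro mult_left_mono sum_mono) auto
  finally show ?thesis by simp
qed

lemma consistent_AJ_subdist_of_cumhaz_eq:
  assumes eq: "\<And>x k. 0 \<le> x \<Longrightarrow> surv M Tt x > 0 \<Longrightarrow> k \<in> {1..d} \<Longrightarrow> cumhaz M Tt Dt k x = cumhaz M T D k x"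
    and t: "0 \<le> t" "surv M Tt t > 0" and k: "k \<in> {1..d}"
  shows "consistent M (\<lambda>n \<omega>. AJ_subdist (sample \<omega>) n d k t) (subdist M T D k t)"
proof (rule consistentI_bound)
  fix e :: real assume "e > 0"
  define \<epsilon> where "\<epsilon> = e * (surv M Tt t)\<^sup>2 / (8 * real d * (2 + real d))"
  have "\<epsilon> > 0" using \<open>e > 0\<close> t(2) d_pos by (simp add: \<epsilon>_def)
  then obtain K g where g: "mass_grid \<epsilon> t K g"
    using mass_grid_exists t(1) by blast
  have eq_t: "cumhaz M Tt Dt k x = cumhaz M T D k x" if "0 \<le> x" "x \<le> t" "k \<in> {1..d}" for x k
    using eq[OF that(1) _ that(3)] surv_Tt_antimono[OF that(2)] t(2) by simp
  define B where "B n \<omega> = (\<Sum>i<K. AJ_cell_dev n \<omega> (g i) (g (Suc i)))" for n \<omega>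
  have "consistent M B (\<Sum>i<K. cell_dev (g i) (g (Suc i)))"
    unfolding B_def using mass_grid_cell[OF g] t(2) by (intro consistent_sum consistent_AJ_cell_dev) auto
  moreover have "(\<Sum>i<K. cell_dev (g i) (g (Suc i))) < e"
    using sum_cell_dev_le[OF eq_t g t(2) \<open>\<epsilon> > 0\<close>] \<open>e > 0\<close> t(2) d_pos by (simp add: \<epsilon>_def)
  moreover have "\<bar>AJ_subdist (sample \<omega>) n d k t - subdist M T D k t\<bar> \<le> B n \<omega>" for n \<omega>
  proof -
    have "\<bar>AJ_subdist (sample \<omega>) n d k t - subdist M T D k t\<bar> \<le> AJ_error \<omega> n t"
      unfolding AJ_error_def using k by (intro add_increasing2 member_le_sum) auto
    also have "\<dots> \<le> B n \<omega>"
      using AJ_error_le_sum_AJ_cell_dev[OF g t(2), of K \<omega> n] g unfolding B_def mass_grid_def by simp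
    finally show ?thesis .
  qed
  moreover have "B n \<in> borel_measurable M" for n
    unfolding B_def by measurable
  ultimately show "\<exists>B b. consistent M B b \<and> b < e \<and> (\<forall>n. B n \<in> borel_measurable M) \<and>
      (\<forall>n. \<forall>\<omega>\<in>space M. \<bar>AJ_subdist (sample \<omega>) n d k t - subdist M T D k t\<bar> \<le> B n \<omega>)"
    by blast
qed

lemma consistent_AJ_subdist_iff_cumhaz_eq:
  "(\<forall>t\<in>{t. 0 \<le> t \<and> surv M Tt t > 0}. \<forall>j\<in>{1..d}.
      consistent M (\<lambda>n \<omega>. AJ (sample \<omega>) n d t $$ (0,j)) (Pmat M T D d t $$ (0,j)))
   \<longleftrightarrow> (\<forall>t\<in>{t. 0 \<le> t \<and> surv M Tt t > 0}. \<forall>j\<in>{1..d}. cumhaz M Tt Dt j t = cumhaz M T D j t)"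
  by (auto simp: AJ_eq_first_row_mat Pmat_eq_first_row_mat first_row_mat_def
      intro: cumhaz_eq_of_consistent consistent_AJ_subdist_of_cumhaz_eq)

lemma consistent_AJ_iff_cumhaz_eq:
  "(\<forall>t\<in>{t. 0 \<le> t \<and> surv M Tt t > 0}. \<forall>i<d+1. \<forall>k<d+1.
      consistent M (\<lambda>n \<omega>. AJ (sample \<omega>) n d t $$ (i,k)) (Pmat M T D d t $$ (i,k)))
   \<longleftrightarrow> (\<forall>t\<in>{t. 0 \<le> t \<and> surv M Tt t > 0}. \<forall>j\<in>{1..d}. cumhaz M Tt Dt j t = cumhaz M T D j t)"
proof
  assume "\<forall>t\<in>{t. 0 \<le> t \<and> surv M Tt t > 0}. \<forall>i<d+1. \<forall>k<d+1.
      consistent M (\<lambda>n \<omega>. AJ (sample \<omega>) n d t $$ (i,k)) (Pmat M T D d t $$ (i,k))"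
  then show "\<forall>t\<in>{t. 0 \<le> t \<and> surv M Tt t > 0}. \<forall>j\<in>{1..d}. cumhaz M Tt Dt j t = cumhaz M T D j t"
    unfolding consistent_AJ_subdist_iff_cumhaz_eq[symmetric] by auto
next
  assume eq: "\<forall>t\<in>{t. 0 \<le> t \<and> surv M Tt t > 0}. \<forall>j\<in>{1..d}. cumhaz M Tt Dt j t = cumhaz M T D j t"
  have F: "consistent M (\<lambda>n \<omega>. AJ_subdist (sample \<omega>) n d k t) (subdist M T D k t)"
    if "0 \<le> t" "surv M Tt t > 0" "k \<in> {1..d}" for t k
    using eq that by (intro consistent_AJ_subdist_of_cumhaz_eq) auto
  then have "consistent M (\<lambda>n \<omega>. AJ_surv (sample \<omega>) n d t) (surv M T t)"
    if "0 \<le> t" "surv M Tt t > 0" for t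
    unfolding AJ_surv_eq surv_T_eq using that by (intro consistent_diff consistent_const consistent_sum) auto
  with F show "\<forall>t\<in>{t. 0 \<le> t \<and> surv M Tt t > 0}. \<forall>i<d+1. \<forall>k<d+1.
      consistent M (\<lambda>n \<omega>. AJ (sample \<omega>) n d t $$ (i,k)) (Pmat M T D d t $$ (i,k))"
    by (auto simp: AJ_eq_first_row_mat Pmat_eq_first_row_mat first_row_mat_def consistent_const)
qed

end

theorem proposition1:
  fixes M :: "'a measure" and d :: nat
    and T Tt :: "'a \<Rightarrow> real" and D Dt :: "'a \<Rightarrow> nat"
    and X :: "nat \<Rightarrow> 'a \<Rightarrow> real \<times> nat"
  assumes "prob_space M"
    and "d \<ge> 1"
    and "T \<in> borel_measurable M" and "\<forall>\<omega>\<in>space M. T \<omega> > 0"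
    and "D \<in> measurable M (count_space UNIV)" and "\<forall>\<omega>\<in>space M. D \<omega> \<in> {1..d}"
    and "Tt \<in> borel_measurable M" and "\<forall>\<omega>\<in>space M. 0 < Tt \<omega> \<and> Tt \<omega> \<le> T \<omega>"
    and "\<forall>\<omega>. Dt \<omega> = (if Tt \<omega> = T \<omega> then D \<omega> else 0)"
    and "prob_space.indep_vars M (\<lambda>_. borel \<Otimes>\<^sub>M count_space UNIV) X UNIV"
    and "\<forall>i. distr M (borel \<Otimes>\<^sub>M count_space UNIV) (X i)
             = distr M (borel \<Otimes>\<^sub>M count_space UNIV) (\<lambda>\<omega>. (Tt \<omega>, Dt \<omega>))"
  shows "((\<forall>t\<in>{t. 0 \<le> t \<and> surv M Tt t > 0}. \<forall>i<d+1. \<forall>k<d+1.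
             consistent M (\<lambda>n \<omega>. AJ (\<lambda>m. X m \<omega>) n d t $$ (i,k)) (Pmat M T D d t $$ (i,k)))
          \<longleftrightarrow> (\<forall>t\<in>{t. 0 \<le> t \<and> surv M Tt t > 0}. Hmat M Tt Dt d t = Hmat M T D d t))
       \<and> ((\<forall>t\<in>{t. 0 \<le> t \<and> surv M Tt t > 0}. \<forall>j\<in>{1..d}.
             consistent M (\<lambda>n \<omega>. AJ (\<lambda>m. X m \<omega>) n d t $$ (0,j)) (Pmat M T D d t $$ (0,j)))
          \<longleftrightarrow> (\<forall>t\<in>{t. 0 \<le> t \<and> surv M Tt t > 0}. \<forall>j\<in>{1..d}.
             cumhaz M Tt Dt j t = cumhaz M T D j t))"
proof -
  interpret censored_competing_risks M d T Tt D Dt X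
    unfolding censored_competing_risks_def censored_competing_risks_axioms_def using assms by auto
  show ?thesis
    using consistent_AJ_iff_cumhaz_eq consistent_AJ_subdist_iff_cumhaz_eq by (simp add: Hmat_eq_iff)
qed

end
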